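(* If $H$ is a triangle-cactus, then $K_1\nabla H$ is a planar graph and $\phi(K_1\nabla H)=t(H)$.
   Context: For a graph $G$, $\phi(G)$ is the maximum number of pairwise edge-disjoint cycles in $G$; $t(H)$ is the number of triangles in $H$. A block is a maximal connected subgraph without cut vertices; a triangle-cactus is a connected graph each of whose blocks is a triangle. $K_1\nabla H$ is the graph obtained from $H$ by adding a new vertex adjacent to all vertices of $H$. *)

theory Defs
  imports "HOL-Analysis.Analysis"
begin

definition simple_graph :: "'a set \<Rightarrow> 'a set set \<Rightarrow> bool" where
  "simple_graph V E \<longleftrightarrow> finite V \<and> (\<forall>e\<in>E. \<exists>u v. u \<noteq> v \<and> u \<in> V \<and> v \<in> V \<and> e = {u, v})"

definition subgraph :: "'a set \<Rightarrow> 'a set set \<Rightarrow> 'a set \<Rightarrow> 'a set set \<Rightarrow> bool" where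
  "subgraph V' E' V E \<longleftrightarrow> V' \<subseteq> V \<and> E' \<subseteq> E \<and> (\<forall>e\<in>E'. e \<subseteq> V')"

definition connected_graph :: "'a set \<Rightarrow> 'a set set \<Rightarrow> bool" where
  "connected_graph V E \<longleftrightarrow> V \<noteq> {} \<and>
     (\<forall>u\<in>V. \<forall>v\<in>V. (\<lambda>x y. x \<in> V \<and> y \<in> V \<and> {x, y} \<in> E)\<^sup>*\<^sup>* u v)"

definition no_cut_vertex :: "'a set \<Rightarrow> 'a set set \<Rightarrow> bool" where
  "no_cut_vertex V E \<longleftrightarrow>
     (\<forall>v\<in>V. V - {v} = {} \<or> connected_graph (V - {v}) {e\<in>E. v \<notin> e})"

definition is_block :: "'a set \<Rightarrow> 'a set set \<Rightarrow> 'a set \<Rightarrow> 'a set set \<Rightarrow> bool" where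
  "is_block V E B F \<longleftrightarrow> subgraph B F V E \<and> connected_graph B F \<and> no_cut_vertex B F \<and>
     (\<forall>B' F'. subgraph B' F' V E \<and> connected_graph B' F' \<and> no_cut_vertex B' F' \<and>
        B \<subseteq> B' \<and> F \<subseteq> F' \<longrightarrow> B' = B \<and> F' = F)"

definition is_triangle_graph :: "'a set \<Rightarrow> 'a set set \<Rightarrow> bool" where
  "is_triangle_graph B F \<longleftrightarrow> (\<exists>a b c. a \<noteq> b \<and> b \<noteq> c \<and> a \<noteq> c \<and>
      B = {a, b, c} \<and> F = {{a, b}, {b, c}, {a, c}})"

definition triangle_cactus :: "'a set \<Rightarrow> 'a set set \<Rightarrow> bool" where
  "triangle_cactus V E \<longleftrightarrow> connected_graph V E \<and>
     (\<forall>B F. is_block V E B F \<longrightarrow> is_triangle_graph B F)"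

definition num_triangles :: "'a set \<Rightarrow> 'a set set \<Rightarrow> nat" where
  "num_triangles V E = card {T. T \<subseteq> V \<and> card T = 3 \<and> (\<forall>x\<in>T. \<forall>y\<in>T. x \<noteq> y \<longrightarrow> {x, y} \<in> E)}"

definition is_cycle :: "'a set set \<Rightarrow> 'a set set \<Rightarrow> bool" where
  "is_cycle E C \<longleftrightarrow> (\<exists>vs. 3 \<le> length vs \<and> distinct vs \<and>
     C = {{vs ! i, vs ! ((i + 1) mod length vs)} | i. i < length vs} \<and> C \<subseteq> E)"

definition phi :: "'a set \<Rightarrow> 'a set set \<Rightarrow> nat" where
  "phi V E = Max {card \<C> | \<C>. \<C> \<subseteq> {C. is_cycle E C} \<and> pairwise disjnt \<C>}"

definition join_K1_V :: "'a set \<Rightarrow> 'a option set" where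
  "join_K1_V V = insert None (Some ` V)"

definition join_K1_E :: "'a set \<Rightarrow> 'a set set \<Rightarrow> 'a option set set" where
  "join_K1_E V E = (image Some ` E) \<union> {{None, Some v} | v. v \<in> V}"

definition planar :: "'a set \<Rightarrow> 'a set set \<Rightarrow> bool" where
  "planar V E \<longleftrightarrow> (\<exists>(p :: 'a \<Rightarrow> complex) (\<gamma> :: 'a set \<Rightarrow> real \<Rightarrow> complex).
     inj_on p V \<and>
     (\<forall>e\<in>E. arc (\<gamma> e) \<and> {pathstart (\<gamma> e), pathfinish (\<gamma> e)} = p ` e) \<and>
     (\<forall>e\<in>E. \<forall>v\<in>V. p v \<in> path_image (\<gamma> e) \<longrightarrow> v \<in> e) \<and>
     (\<forall>e\<in>E. \<forall>e'\<in>E. e \<noteq> e' \<longrightarrow> path_image (\<gamma> e) \<inter> path_image (\<gamma> e') \<subseteq> p ` (e \<inter> e')))"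

end

(* A triangle cactus arises from a single vertex by repeatedly gluing a triangle onto one existing
   vertex: the first two vertices of a longest path always span such a pendant triangle. Everything
   is proved by induction along this construction.

   The t triangles are edge-disjoint cycles of the cone K_1 + H. Conversely, the two new vertices of
   the last glued triangle have degree three in the cone, so each lies on at most one cycle of an
   edge-disjoint family, and two such cycles merge into one cycle avoiding the new triangle; hence
   removing the triangle costs the family at most one cycle.

   For planarity, order the vertices of H on a line so that no two edges interleave, lift them to
   the parabola y = x^2 and put the cone vertex far below: drawn as straight segments, two edges
   then meet only in a common endpoint. *)

theory Submission
  imports Defs
begin

lemma simple_graph_edgeE:
  assumes "simple_graph V E" "e \<in> E"
  obtains u v where "u \<noteq> v" "u \<in> V" "v \<in> V" "e = {u, v}"
  using assms unfolding simple_graph_def by blast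

lemma simple_graph_edge_subset: "simple_graph V E \<Longrightarrow> e \<in> E \<Longrightarrow> e \<subseteq> V"
  by (metis simple_graph_edgeE empty_subsetI insert_subset)

lemma simple_graph_doubletonD:
  assumes "simple_graph V E" "{u, v} \<in> E"
  shows "u \<noteq> v" "u \<in> V" "v \<in> V"
  using simple_graph_edgeE[OF assms] by (metis doubleton_eq_iff)+

lemma simple_graph_finite_edges: "simple_graph V E \<Longrightarrow> finite E"
  by (meson Pow_iff finite_Pow_iff finite_subset simple_graph_def simple_graph_edge_subset subsetI)

lemma simple_graph_iff_card: "simple_graph V E \<longleftrightarrow> finite V \<and> (\<forall>e\<in>E. card e = 2 \<and> e \<subseteq> V)"
proof -
  have "(\<exists>u v. u \<noteq> v \<and> u \<in> V \<and> v \<in> V \<and> e = {u, v}) \<longleftrightarrow> card e = 2 \<and> e \<subseteq> V" for e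
  proof
    assume "card e = 2 \<and> e \<subseteq> V"
    moreover obtain u v where "e = {u, v}" "u \<noteq> v" using calculation card_2_iff[of e] by blast
    ultimately show "\<exists>u v. u \<noteq> v \<and> u \<in> V \<and> v \<in> V \<and> e = {u, v}"
      by (intro exI[of _ u] exI[of _ v]) simp
  qed auto
  then show ?thesis unfolding simple_graph_def by simp
qed

subsection \<open>Paths and cycles\<close>

definition graph_path :: "'a set set \<Rightarrow> 'a list \<Rightarrow> bool" where
  "graph_path E p \<longleftrightarrow> distinct p \<and> successively (\<lambda>u v. {u, v} \<in> E) p"

definition cycle_edges :: "'a list \<Rightarrow> 'a set set" where
  "cycle_edges vs = {{vs ! i, vs ! ((i + 1) mod length vs)} | i. i < length vs}"

lemma is_cycle_iff:
  "is_cycle E C \<longleftrightarrow> (\<exists>vs. 3 \<le> length vs \<and> distinct vs \<and> C = cycle_edges vs \<and> C \<subseteq> E)"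
  unfolding is_cycle_def cycle_edges_def by simp

lemma cycle_edges_subset_iff:
  "cycle_edges vs \<subseteq> E \<longleftrightarrow> (\<forall>i<length vs. {vs ! i, vs ! ((i + 1) mod length vs)} \<in> E)"
  unfolding cycle_edges_def by auto

lemma cycle_edges_triangle: "cycle_edges [x, y, z] = {{x, y}, {y, z}, {z, x}}"
proof -
  have image: "\<And>f n. {f i | i. i < (n::nat)} = f ` {..<n}" by blast
  show ?thesis unfolding cycle_edges_def image by (simp add: lessThan_Suc insert_commute)
qed

lemma is_cycle_subset: "is_cycle E C \<Longrightarrow> C \<subseteq> E"
  unfolding is_cycle_iff by blast

lemma is_cycle_mono: "is_cycle E C \<Longrightarrow> C \<subseteq> E' \<Longrightarrow> is_cycle E' C"
  unfolding is_cycle_iff by blast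

lemma is_cycle_triangle:
  assumes "x \<noteq> y" "y \<noteq> z" "x \<noteq> z" "{{x, y}, {y, z}, {z, x}} \<subseteq> E"
  shows "is_cycle E {{x, y}, {y, z}, {z, x}}"
  unfolding is_cycle_iff using assms cycle_edges_triangle[of x y z]
  by (intro exI[of _ "[x, y, z]"]) auto

lemma is_cycle_nonempty: "is_cycle E C \<Longrightarrow> C \<noteq> {}"
  unfolding is_cycle_iff cycle_edges_def by fastforce

lemma add_one_mod_neq:
  fixes i n :: nat
  assumes "i < n" "2 \<le> n"
  shows "(i + 1) mod n \<noteq> i"
proof (cases "i + 1 < n")
  case False
  then have "n = i + 1" using assms(1) by simp
  then show ?thesis using assms(2) by simp
qed simp

lemma is_cycle_edge_doubleton:
  assumes "is_cycle E C" "e \<in> C"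
  shows "\<exists>u v. u \<noteq> v \<and> e = {u, v}"
proof -
  obtain vs where vs: "3 \<le> length vs" "distinct vs" "C = cycle_edges vs"
    using assms(1) unfolding is_cycle_iff by blast
  then obtain i where i: "i < length vs" "e = {vs ! i, vs ! ((i + 1) mod length vs)}"
    using assms(2) unfolding cycle_edges_def by blast
  have "0 < length vs" using vs(1) by linarith
  then have "(i + 1) mod length vs < length vs" by simp
  then have "vs ! i \<noteq> vs ! ((i + 1) mod length vs)"
    using add_one_mod_neq[of i "length vs"] vs(1,2) i(1) by (simp add: nth_eq_iff_index_eq)
  then show ?thesis using i(2) by blast
qed

lemma is_cycle_two_edges_at:
  assumes "is_cycle E C" "e \<in> C" "x \<in> e"
  shows "\<exists>e1\<in>C. \<exists>e2\<in>C. e1 \<noteq> e2 \<and> x \<in> e1 \<and> x \<in> e2"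
proof -
  obtain vs where vs: "3 \<le> length vs" "distinct vs" "C = cycle_edges vs"
    using assms(1) unfolding is_cycle_iff by blast
  let ?n = "length vs"
  let ?edge = "\<lambda>i. {vs ! i, vs ! ((i + 1) mod ?n)}"
  have n: "0 < ?n" using vs(1) by linarith
  have edge: "?edge i \<in> C" if "i < ?n" for i using that vs(3) unfolding cycle_edges_def by blast
  obtain i where i: "i < ?n" "e = ?edge i" using assms(2) vs(3) unfolding cycle_edges_def by blast
  have "(i + 1) mod ?n < ?n" using n by simp
  then obtain j where j: "j < ?n" "x = vs ! j" using i assms(3) by blast
  define j' where "j' = (if j = 0 then ?n - 1 else j - 1)"
  have j': "j' < ?n" "(j' + 1) mod ?n = j" using j vs(1) unfolding j'_def by auto
  have "(j + 1) mod ?n \<noteq> j'"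
  proof (cases "j + 1 < ?n")
    case True
    then show ?thesis using vs(1) unfolding j'_def by auto
  next
    case False
    then have "j + 1 = ?n" using j(1) by simp
    then show ?thesis using vs(1) unfolding j'_def by auto
  qed
  then have "vs ! ((j + 1) mod ?n) \<noteq> vs ! j'"
    using vs(2) j'(1) n by (simp add: nth_eq_iff_index_eq)
  moreover have "vs ! ((j + 1) mod ?n) \<noteq> vs ! j"
    using add_one_mod_neq[of j ?n] vs(1,2) j(1) n by (simp add: nth_eq_iff_index_eq)
  ultimately have ne: "?edge j \<noteq> ?edge j'" using j'(2) by (auto simp: doubleton_eq_iff)
  obtain e1 e2 where "e1 = ?edge j" "e2 = ?edge j'" by blast
  with ne edge[OF j(1)] edge[OF j'(1)] have "e1 \<in> C" "e2 \<in> C" "e1 \<noteq> e2" "x \<in> e1" "x \<in> e2"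
    using j(2) j'(2) by simp_all
  then show ?thesis by blast
qed

lemma graph_path_Cons_Cons:
  "graph_path E (x # y # ys) \<longleftrightarrow> x \<notin> set (y # ys) \<and> {x, y} \<in> E \<and> graph_path E (y # ys)"
  unfolding graph_path_def by auto

lemma graph_path_nth: "graph_path E p \<Longrightarrow> Suc i < length p \<Longrightarrow> {p ! i, p ! Suc i} \<in> E"
  using successively_nth[of "\<lambda>u v. {u, v} \<in> E" p i] unfolding graph_path_def by simp

lemma graph_path_Cons:
  assumes "graph_path E p" "p \<noteq> []" "w \<notin> set p" "{w, p ! 0} \<in> E"
  shows "graph_path E (w # p)"
  using assms by (cases p) (auto simp: graph_path_Cons_Cons)

lemma graph_path_closing_edge:
  assumes "graph_path E p" "j < length p" "{p ! j, p ! 0} \<in> E"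
  shows "cycle_edges (take (Suc j) p) \<subseteq> E"
  unfolding cycle_edges_subset_iff
proof (intro allI impI)
  fix i assume "i < length (take (Suc j) p)"
  then have i: "i \<le> j" using assms(2) by simp
  show "{take (Suc j) p ! i, take (Suc j) p ! ((i + 1) mod length (take (Suc j) p))} \<in> E"
  proof (cases "i = j")
    case True
    then show ?thesis using assms(2,3) by simp
  next
    case False
    then show ?thesis using i assms(2) graph_path_nth[OF assms(1), of i] by simp
  qed
qed

lemma longest_graph_path_exists:
  assumes "finite W" "graph_path E q" "set q \<subseteq> W"
  obtains p where "graph_path E p" "set p \<subseteq> W" "length q \<le> length p"
    "\<And>p'. graph_path E p' \<Longrightarrow> set p' \<subseteq> W \<Longrightarrow> length p' \<le> length p"
proof -
  let ?P = "\<lambda>p. graph_path E p \<and> set p \<subseteq> W"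
  have "length p < Suc (card W)" if "?P p" for p
  proof -
    have "length p = card (set p)" using that by (simp add: graph_path_def distinct_card)
    also have "\<dots> \<le> card W" using that card_mono[OF assms(1)] by blast
    finally show ?thesis by simp
  qed
  then obtain p where "?P p" "\<And>p'. ?P p' \<Longrightarrow> length p' \<le> length p"
    using Lattices_Big.ex_has_greatest_nat[of ?P q length] assms(2,3) by blast
  then show ?thesis using that assms(2,3) by blast
qed

lemma longest_graph_path_first_neighbour:
  assumes "graph_path E p" "set p \<subseteq> W" "p \<noteq> []"
    and longest: "\<And>p'. graph_path E p' \<Longrightarrow> set p' \<subseteq> W \<Longrightarrow> length p' \<le> length p"
    and "{p ! 0, w} \<in> E" "w \<in> W"
  shows "w \<in> set p"
proof (rule ccontr)
  assume "w \<notin> set p"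
  moreover have "{w, p ! 0} \<in> E" using assms(5) by (simp add: insert_commute)
  ultimately have "graph_path E (w # p)" by (rule graph_path_Cons[OF assms(1,3)])
  then show False using longest[of "w # p"] assms(2,6) by simp
qed

lemma doubleton_through:
  assumes "\<exists>u v. u \<noteq> v \<and> e = {u, v}" "z \<in> e"
  obtains y where "y \<noteq> z" "e = {z, y}"
proof -
  obtain u v where uv: "u \<noteq> v" "e = {u, v}" using assms(1) by blast
  show thesis
  proof (cases "z = u")
    case True
    then show thesis using that[of v] uv by simp
  next
    case False
    then have "z = v" using assms(2) uv by simp
    then show thesis using that[of u] uv by (simp add: insert_commute)
  qed
qed

lemma cycle_exists_if_min_degree_two:
  assumes "finite D" and doubletons: "\<forall>e\<in>D. \<exists>u v. u \<noteq> v \<and> e = {u, v}" and "D \<noteq> {}"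
    and degree: "\<forall>z\<in>\<Union>D. \<exists>e1\<in>D. \<exists>e2\<in>D. e1 \<noteq> e2 \<and> z \<in> e1 \<and> z \<in> e2"
  shows "\<exists>C. is_cycle D C"
proof -
  have fin: "finite (\<Union>D)" using assms(1) doubletons by fastforce
  obtain e where "e \<in> D" using assms(3) by blast
  with doubletons obtain u v where uv: "u \<noteq> v" "{u, v} \<in> D" by force
  then have "graph_path D [u, v]" "set [u, v] \<subseteq> \<Union>D"
    unfolding graph_path_def by auto
  then obtain p where p: "graph_path D p" "set p \<subseteq> \<Union>D" "length [u, v] \<le> length p"
    and longest: "\<And>p'. graph_path D p' \<Longrightarrow> set p' \<subseteq> \<Union>D \<Longrightarrow> length p' \<le> length p"
    using longest_graph_path_exists[OF fin] by blast
  have "p \<noteq> []" using p(3) by (cases p) auto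
  then have "p ! 0 \<in> set p" by simp
  then have "p ! 0 \<in> \<Union>D" using p(2) by blast
  then obtain e1 e2 where e: "e1 \<in> D" "e2 \<in> D" "e1 \<noteq> e2" "p ! 0 \<in> e1" "p ! 0 \<in> e2"
    using degree by blast
  obtain y1 y2 where "y1 \<noteq> p ! 0" "e1 = {p ! 0, y1}" "y2 \<noteq> p ! 0" "e2 = {p ! 0, y2}"
    using doubleton_through[OF bspec[OF doubletons e(1)] e(4)]
      doubleton_through[OF bspec[OF doubletons e(2)] e(5)] by metis
  with e obtain y where y: "y \<noteq> p ! 0" "y \<noteq> p ! 1" "{p ! 0, y} \<in> D"
    by (cases "y1 = p ! 1") auto
  have "y \<in> \<Union>D" using y(3) by blast
  then have "y \<in> set p"
    using longest_graph_path_first_neighbour[OF p(1,2) \<open>p \<noteq> []\<close> longest y(3)] by blast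
  then obtain j where j: "j < length p" "y = p ! j" by (auto simp: in_set_conv_nth)
  with y have "j \<noteq> 0" "j \<noteq> 1" by (metis One_nat_def)+
  then have "2 \<le> j" by simp
  have "cycle_edges (take (Suc j) p) \<subseteq> D"
    using graph_path_closing_edge[OF p(1) j(1)] y(3) j(2) by (simp add: insert_commute)
  moreover have "distinct (take (Suc j) p)" "3 \<le> length (take (Suc j) p)"
    using p(1) j(1) \<open>2 \<le> j\<close> unfolding graph_path_def by auto
  ultimately show ?thesis unfolding is_cycle_iff by blast
qed

lemma is_cycle_finite:
  assumes "is_cycle G C"
  shows "finite C"
proof -
  have image: "\<And>f n. {f i | i. i < (n::nat)} = f ` {..<n}" by blast
  show ?thesis using assms unfolding is_cycle_iff cycle_edges_def image by auto
qed

lemma is_cycle_edge_avoiding: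
  assumes C: "is_cycle G C" and "z \<in> \<Union>C" "z \<noteq> x"
  shows "\<exists>f\<in>C. z \<in> f \<and> x \<notin> f"
proof -
  obtain e where "e \<in> C" "z \<in> e" using assms(2) by blast
  then obtain f1 f2 where f: "f1 \<in> C" "f2 \<in> C" "f1 \<noteq> f2" "z \<in> f1" "z \<in> f2"
    using is_cycle_two_edges_at[OF C] by blast
  obtain y1 where y1: "f1 = {z, y1}"
    by (rule doubleton_through[OF is_cycle_edge_doubleton[OF C f(1)] f(4)])
  obtain y2 where y2: "f2 = {z, y2}"
    by (rule doubleton_through[OF is_cycle_edge_doubleton[OF C f(2)] f(5)])
  have "x \<notin> f1 \<or> x \<notin> f2" using y1 y2 f(3) assms(3) by auto
  then show ?thesis using f by blast
qed

lemma disjoint_cycles_through_vertex_unique: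
  assumes cycles: "\<forall>C\<in>\<C>. is_cycle G C" and "pairwise disjnt \<C>"
    and incident: "\<And>e. e \<in> G \<Longrightarrow> x \<in> e \<Longrightarrow> e \<in> {e1, e2, e3}"
    and C: "C \<in> \<C>" "x \<in> \<Union>C" and C': "C' \<in> \<C>" "x \<in> \<Union>C'"
  shows "C = C'"
proof (rule ccontr)
  assume "C \<noteq> C'"
  then have disjoint: "C \<inter> C' = {}"
    using assms(2) C(1) C'(1) unfolding pairwise_def disjnt_def by blast
  have cyc: "is_cycle G C" "is_cycle G C'" using cycles C(1) C'(1) by blast+
  obtain f1 f2 where f: "f1 \<in> C" "f2 \<in> C" "f1 \<noteq> f2" "x \<in> f1" "x \<in> f2"
    using C(2) is_cycle_two_edges_at[OF cyc(1)] by blast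
  obtain f3 f4 where f': "f3 \<in> C'" "f4 \<in> C'" "f3 \<noteq> f4" "x \<in> f3" "x \<in> f4"
    using C'(2) is_cycle_two_edges_at[OF cyc(2)] by blast
  have "f1 \<in> {e1, e2, e3}" "f2 \<in> {e1, e2, e3}" "f3 \<in> {e1, e2, e3}" "f4 \<in> {e1, e2, e3}"
    using incident is_cycle_subset[OF cyc(1)] is_cycle_subset[OF cyc(2)] f f' by blast+
  moreover have "f1 \<noteq> f3" "f1 \<noteq> f4" "f2 \<noteq> f3" "f2 \<noteq> f4" using disjoint f f' by blast+
  ultimately show False using f(3) f'(3) by blast
qed

lemma is_cycle_two_edges_outside:
  assumes C: "is_cycle G C" and "z \<in> \<Union>C" "\<And>f. f \<in> R \<Longrightarrow> z \<notin> f"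
  obtains e1 e2 where "e1 \<in> C" "e2 \<in> C" "e1 \<noteq> e2" "z \<in> e1" "z \<in> e2" "e1 \<notin> R" "e2 \<notin> R"
proof -
  obtain e where "e \<in> C" "z \<in> e" using assms(2) by blast
  then obtain e1 e2 where e: "e1 \<in> C" "e2 \<in> C" "e1 \<noteq> e2" "z \<in> e1" "z \<in> e2"
    using is_cycle_two_edges_at[OF C] by blast
  moreover have "e1 \<notin> R" "e2 \<notin> R" using e(4,5) assms(3) by blast+
  ultimately show thesis by (rule that)
qed

text \<open>Two edge-disjoint cycles through \<open>c\<close> and \<open>d\<close>, which reach \<open>c\<close> and \<open>d\<close> via the private
  vertices \<open>x\<close> and \<open>y\<close> respectively, leave a cycle once \<open>x\<close> and \<open>y\<close> are cut out: every remaining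
  vertex keeps degree at least two.\<close>

lemma merged_cycles_degree_two:
  assumes C1: "is_cycle G C1" and C2: "is_cycle G C2" and disjoint: "C1 \<inter> C2 = {}"
    and x: "{x, c} \<in> C1" "{x, d} \<in> C1" "\<And>e. e \<in> C1 \<Longrightarrow> x \<in> e \<Longrightarrow> e \<in> {{x, c}, {x, d}}"
      "x \<notin> \<Union>C2"
    and y: "{y, c} \<in> C2" "{y, d} \<in> C2" "\<And>e. e \<in> C2 \<Longrightarrow> y \<in> e \<Longrightarrow> e \<in> {{y, c}, {y, d}}"
      "y \<notin> \<Union>C1"
    and D: "D = (C1 - {{x, c}, {x, d}}) \<union> (C2 - {{y, c}, {y, d}})" and z: "z \<in> \<Union>D"
  shows "\<exists>e1\<in>D. \<exists>e2\<in>D. e1 \<noteq> e2 \<and> z \<in> e1 \<and> z \<in> e2"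
proof -
  have "x \<notin> f \<and> y \<notin> f" if "f \<in> D" for f
  proof -
    from that consider "f \<in> C1" "f \<notin> {{x, c}, {x, d}}" | "f \<in> C2" "f \<notin> {{y, c}, {y, d}}"
      unfolding D by blast
    then show ?thesis
    proof cases
      case 1
      have "x \<notin> f" using 1(2) x(3)[OF 1(1)] by (rule contrapos_nn)
      then show ?thesis using 1(1) y(4) by blast
    next
      case 2
      have "y \<notin> f" using 2(2) y(3)[OF 2(1)] by (rule contrapos_nn)
      then show ?thesis using 2(1) x(4) by blast
    qed
  qed
  then have "z \<noteq> x" "z \<noteq> y" using z by blast+
  have c_d: "c \<in> \<Union>C1" "d \<in> \<Union>C1" "c \<in> \<Union>C2" "d \<in> \<Union>C2" using x(1,2) y(1,2) by blast+
  consider "z \<in> \<Union>C1" "z \<in> \<Union>C2" | "z \<in> \<Union>C1" "z \<notin> \<Union>C2" | "z \<notin> \<Union>C1" "z \<in> \<Union>C2"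
    using z unfolding D by blast
  then show ?thesis
  proof cases
    case 1
    obtain f1 where f1: "f1 \<in> C1" "z \<in> f1" "x \<notin> f1"
      using is_cycle_edge_avoiding[OF C1 1(1) \<open>z \<noteq> x\<close>] by blast
    obtain f2 where f2: "f2 \<in> C2" "z \<in> f2" "y \<notin> f2"
      using is_cycle_edge_avoiding[OF C2 1(2) \<open>z \<noteq> y\<close>] by blast
    have "f1 \<in> D" using f1(1,3) unfolding D by auto
    moreover have "f2 \<in> D" using f2(1,3) unfolding D by auto
    moreover have "f1 \<noteq> f2" using f1(1) f2(1) disjoint by blast
    ultimately show ?thesis using f1(2) f2(2) by blast
  next
    case 2
    then have outside: "z \<notin> f" if "f \<in> {{x, c}, {x, d}}" for f using that \<open>z \<noteq> x\<close> c_d by auto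
    obtain e1 e2 where e: "e1 \<in> C1" "e2 \<in> C1" "e1 \<noteq> e2" "z \<in> e1" "z \<in> e2"
        "e1 \<notin> {{x, c}, {x, d}}" "e2 \<notin> {{x, c}, {x, d}}"
      by (rule is_cycle_two_edges_outside[OF C1 2(1) outside])
    then have "e1 \<in> D" "e2 \<in> D" unfolding D by blast+
    then show ?thesis using e(3-5) by blast
  next
    case 3
    then have outside: "z \<notin> f" if "f \<in> {{y, c}, {y, d}}" for f using that \<open>z \<noteq> y\<close> c_d by auto
    obtain e1 e2 where e: "e1 \<in> C2" "e2 \<in> C2" "e1 \<noteq> e2" "z \<in> e1" "z \<in> e2"
        "e1 \<notin> {{y, c}, {y, d}}" "e2 \<notin> {{y, c}, {y, d}}"
      by (rule is_cycle_two_edges_outside[OF C2 3(2) outside])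
    then have "e1 \<in> D" "e2 \<in> D" unfolding D by blast+
    then show ?thesis using e(3-5) by blast
  qed
qed

lemma cycle_in_merged_cycles:
  assumes C1: "is_cycle G C1" and C2: "is_cycle G C2" and disjoint: "C1 \<inter> C2 = {}"
    and x: "{x, c} \<in> C1" "{x, d} \<in> C1" "\<And>e. e \<in> C1 \<Longrightarrow> x \<in> e \<Longrightarrow> e \<in> {{x, c}, {x, d}}"
      "x \<notin> \<Union>C2"
    and y: "{y, c} \<in> C2" "{y, d} \<in> C2" "\<And>e. e \<in> C2 \<Longrightarrow> y \<in> e \<Longrightarrow> e \<in> {{y, c}, {y, d}}"
      "y \<notin> \<Union>C1"
  shows "\<exists>C. is_cycle ((C1 - {{x, c}, {x, d}}) \<union> (C2 - {{y, c}, {y, d}})) C"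
proof (rule cycle_exists_if_min_degree_two)
  let ?D = "(C1 - {{x, c}, {x, d}}) \<union> (C2 - {{y, c}, {y, d}})"
  show "finite ?D" using is_cycle_finite[OF C1] is_cycle_finite[OF C2] by blast
  show "\<forall>e\<in>?D. \<exists>u v. u \<noteq> v \<and> e = {u, v}"
    using is_cycle_edge_doubleton[OF C1] is_cycle_edge_doubleton[OF C2] by (meson DiffD1 UnE)
  have "c \<noteq> x" using is_cycle_edge_doubleton[OF C1 x(1)] by (auto simp: doubleton_eq_iff)
  then obtain f where "f \<in> C1" "x \<notin> f" using is_cycle_edge_avoiding[OF C1, of c x] x(1) by blast
  then show "?D \<noteq> {}" by blast
  show "\<forall>z\<in>\<Union>?D. \<exists>e1\<in>?D. \<exists>e2\<in>?D. e1 \<noteq> e2 \<and> z \<in> e1 \<and> z \<in> e2"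
    by (intro ballI merged_cycles_degree_two[OF C1 C2 disjoint x y refl])
qed

lemma cycle_edges_subset_set:
  assumes "e \<in> cycle_edges vs"
  shows "e \<subseteq> set vs"
proof -
  obtain i where i: "i < length vs" "e = {vs ! i, vs ! ((i + 1) mod length vs)}"
    using assms unfolding cycle_edges_def by blast
  then have "0 < length vs" by linarith
  then show ?thesis using i by simp
qed

lemma successively_cycle_edges: "successively (\<lambda>x y. {x, y} \<in> cycle_edges vs) vs"
  unfolding successively_conv_nth cycle_edges_def by (metis (mono_tags, lifting) Suc_eq_plus1
      Suc_lessD mem_Collect_eq mod_less)

subsection \<open>Connectivity\<close>

lemma successively_rtranclp_hd:
  assumes "successively R ws" "x \<in> set ws"
  shows "R\<^sup>*\<^sup>* (hd ws) x"
  using assms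
proof (induction ws)
  case (Cons a ws)
  show ?case
  proof (cases "x = a")
    case False
    then have "ws \<noteq> []" "R a (hd ws)" "R\<^sup>*\<^sup>* (hd ws) x"
      using Cons by (auto simp: successively_Cons)
    then show ?thesis by (simp add: converse_rtranclp_into_rtranclp)
  qed simp
qed simp

lemma connected_graph_walk:
  assumes "ws \<noteq> []" "successively (\<lambda>x y. {x, y} \<in> F) ws"
  shows "connected_graph (set ws) F"
  unfolding connected_graph_def
proof (intro conjI ballI)
  let ?R = "\<lambda>x y. x \<in> set ws \<and> y \<in> set ws \<and> {x, y} \<in> F"
  have walk: "successively ?R ws" using assms(2) by (rule successively_mono) simp
  have "symp ?R" by (rule sympI) (simp add: insert_commute)
  then have sym: "symp ?R\<^sup>*\<^sup>*" by (rule symp_rtranclp)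
  fix u v assume "u \<in> set ws" "v \<in> set ws"
  then have "?R\<^sup>*\<^sup>* (hd ws) u" "?R\<^sup>*\<^sup>* (hd ws) v"
    using successively_rtranclp_hd[OF walk] by blast+
  then show "?R\<^sup>*\<^sup>* u v" using sym by (meson rtranclp_trans sympD)
qed (use assms(1) in simp)

lemma connected_graph_edge: "connected_graph {u, v} {{u, v}}"
  using connected_graph_walk[of "[u, v]" "{{u, v}}"] by simp

lemma no_cut_vertex_edge:
  assumes "u \<noteq> v"
  shows "no_cut_vertex {u, v} {{u, v}}"
  unfolding no_cut_vertex_def
proof (intro ballI disjI2)
  fix x assume "x \<in> {u, v}"
  then obtain y where y: "{u, v} - {x} = {y}" using assms by auto
  show "connected_graph ({u, v} - {x}) {e \<in> {{u, v}}. x \<notin> e}"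
    unfolding y using connected_graph_walk[of "[y]"] by simp
qed

lemma connected_graph_cycle:
  assumes "3 \<le> length vs"
  shows "connected_graph (set vs) (cycle_edges vs)"
proof -
  have "vs \<noteq> []" using assms by (cases vs) auto
  then show ?thesis by (rule connected_graph_walk[OF _ successively_cycle_edges])
qed

lemma no_cut_vertex_cycle:
  assumes "3 \<le> length vs" "distinct vs"
  shows "no_cut_vertex (set vs) (cycle_edges vs)"
  unfolding no_cut_vertex_def
proof (intro ballI disjI2)
  fix v assume "v \<in> set vs"
  then obtain k where k: "k < length vs" "vs ! k = v" by (meson in_set_conv_nth)
  let ?P = "\<lambda>x y. {x, y} \<in> cycle_edges vs"
  let ?before = "take k vs" and ?after = "drop (Suc k) vs"
  \<comment> \<open>going round the cycle from the successor of \<open>v\<close> to its predecessor avoids \<open>v\<close>\<close>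
  define ws where "ws = ?after @ ?before"
  have split: "vs = ?before @ v # ?after" using id_take_nth_drop[OF k(1)] unfolding k(2) .
  have "distinct (?before @ v # ?after)" using assms(2) by (simp only: split[symmetric])
  then have v: "v \<notin> set ?before" "v \<notin> set ?after" by auto
  have "set vs = set (?before @ v # ?after)" by (simp only: split[symmetric])
  then have set_ws: "set ws = set vs - {v}" using v unfolding ws_def by auto
  have "successively ?P (?before @ v # ?after)"
    using successively_cycle_edges[of vs] by (simp only: split[symmetric])
  then have "successively ?P ?before" "successively ?P ?after"
    by (auto simp: successively_append_iff successively_Cons)
  moreover have "?P (last ?after) (hd ?before)" if "?after \<noteq> []" "?before \<noteq> []"
  proof -
    have "Suc k < length vs" "0 < k" "vs \<noteq> []" using that by auto
    then have "last ?after = vs ! (length vs - 1)" "hd ?before = vs ! 0"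
      using last_conv_nth[of vs] hd_conv_nth[of vs] by simp_all
    moreover have "length vs - 1 < length vs" "length vs - 1 + 1 = length vs"
      using assms(1) by linarith+
    ultimately show ?thesis
      unfolding cycle_edges_def by (metis (mono_tags, lifting) mem_Collect_eq mod_self)
  qed
  ultimately have "successively ?P ws" unfolding ws_def successively_append_iff by blast
  then have "successively (\<lambda>x y. {x, y} \<in> {e \<in> cycle_edges vs. v \<notin> e}) ws"
    by (rule successively_mono) (use set_ws in auto)
  moreover have "2 \<le> length ws" using k assms(1) unfolding ws_def by simp
  then have "ws \<noteq> []" by (cases ws) auto
  ultimately show "connected_graph (set vs - {v}) {e \<in> cycle_edges vs. v \<notin> e}"
    using connected_graph_walk[of ws] set_ws by simp
qed

lemma connected_graph_retraction:
  assumes "connected_graph V E" "V' \<subseteq> V" "V' \<noteq> {}" "g ` V \<subseteq> V'" "\<And>x. x \<in> V' \<Longrightarrow> g x = x"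
    and edge: "\<And>x y. x \<in> V \<Longrightarrow> y \<in> V \<Longrightarrow> {x, y} \<in> E \<Longrightarrow> g x = g y \<or> {g x, g y} \<in> E'"
  shows "connected_graph V' E'"
  unfolding connected_graph_def
proof (intro conjI ballI)
  let ?R = "\<lambda>x y. x \<in> V \<and> y \<in> V \<and> {x, y} \<in> E"
  let ?R' = "\<lambda>x y. x \<in> V' \<and> y \<in> V' \<and> {x, y} \<in> E'"
  have image: "?R'\<^sup>*\<^sup>* (g s) (g t)" if "?R\<^sup>*\<^sup>* s t" for s t
    using that
  proof (induction rule: rtranclp_induct)
    case (step y z)
    then have "g y = g z \<or> ?R' (g y) (g z)" using edge assms(4) by blast
    with step.IH show ?case by (auto intro: rtranclp.rtrancl_into_rtrancl)
  qed simp
  fix s t assume "s \<in> V'" "t \<in> V'"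
  then show "?R'\<^sup>*\<^sup>* s t"
    using image[of s t] assms(1,2,5) unfolding connected_graph_def by auto
qed (rule assms(3))

lemma connected_graph_has_edge:
  assumes "connected_graph V E" "u \<in> V" "w \<in> V" "u \<noteq> w"
  obtains y where "{u, y} \<in> E"
proof -
  let ?R = "\<lambda>x y. x \<in> V \<and> y \<in> V \<and> {x, y} \<in> E"
  have "?R\<^sup>*\<^sup>* u w" using assms unfolding connected_graph_def by blast
  then have "\<exists>y. ?R u y" using assms(4) by (induction rule: converse_rtranclp_induct) auto
  then show thesis using that by blast
qed

subsection \<open>Triangle cacti are glued from triangles\<close>

lemma block_containing_exists:
  assumes sg: "simple_graph V E"
    and "subgraph S F V E" "connected_graph S F" "no_cut_vertex S F"
  obtains B F' where "is_block V E B F'" "S \<subseteq> B" "F \<subseteq> F'"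
proof -
  have fin: "finite V" "finite E"
    using sg simple_graph_finite_edges unfolding simple_graph_def by auto
  define P where "P = (\<lambda>(B, F'). subgraph B F' V E \<and> connected_graph B F' \<and> no_cut_vertex B F' \<and>
    S \<subseteq> B \<and> F \<subseteq> F')"
  define size where "size = (\<lambda>(B :: 'a set, F' :: 'a set set). card B + card F')"
  have "P (S, F)" unfolding P_def using assms by simp
  moreover have "\<forall>y. P y \<longrightarrow> size y < card V + card E + 1"
  proof (intro allI impI)
    fix y assume "P y"
    then obtain B F' where "y = (B, F')" "subgraph B F' V E" unfolding P_def by auto
    moreover then have "card B \<le> card V" "card F' \<le> card E"
      using fin card_mono unfolding subgraph_def by blast+
    ultimately show "size y < card V + card E + 1" unfolding size_def by simp
  qed
  ultimately obtain B F' where max: "P (B, F')" "\<And>y. P y \<Longrightarrow> size y \<le> size (B, F')"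
    using Lattices_Big.ex_has_greatest_nat[of P "(S, F)" size] by (metis surj_pair)
  then have B: "subgraph B F' V E" "connected_graph B F'" "no_cut_vertex B F'" "S \<subseteq> B" "F \<subseteq> F'"
    unfolding P_def by auto
  have "is_block V E B F'"
    unfolding is_block_def
  proof (intro conjI allI impI)
    fix B'' F'' assume h: "subgraph B'' F'' V E \<and> connected_graph B'' F'' \<and> no_cut_vertex B'' F'' \<and>
      B \<subseteq> B'' \<and> F' \<subseteq> F''"
    then have "P (B'', F'')" unfolding P_def using B by auto
    then have le: "card B'' + card F'' \<le> card B + card F'"
      using max(2) unfolding size_def by fastforce
    have "finite B''" "finite F''" using h fin unfolding subgraph_def by (auto intro: finite_subset)
    moreover have "card B \<le> card B''" "card F' \<le> card F''"
      using h calculation by (auto intro: card_mono)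
    ultimately have "card B = card B''" "card F' = card F''" using le by linarith+
    then show "B'' = B" "F'' = F'" using h \<open>finite B''\<close> \<open>finite F''\<close> card_subset_eq by metis+
  qed (use B in auto)
  then show thesis using that B by blast
qed

definition edges_in_triangles :: "'a set set \<Rightarrow> bool" where
  "edges_in_triangles E \<longleftrightarrow> (\<forall>u v. {u, v} \<in> E \<longrightarrow> (\<exists>w. {u, w} \<in> E \<and> {v, w} \<in> E \<and> w \<noteq> u \<and> w \<noteq> v))"

definition no_long_cycles :: "'a set set \<Rightarrow> bool" where
  "no_long_cycles E \<longleftrightarrow> (\<forall>vs. distinct vs \<longrightarrow> 4 \<le> length vs \<longrightarrow> \<not> cycle_edges vs \<subseteq> E)"

lemma triangle_cactus_edges_in_triangles:
  assumes sg: "simple_graph V E" and "triangle_cactus V E"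
  shows "edges_in_triangles E"
  unfolding edges_in_triangles_def
proof (intro allI impI)
  fix u v assume e: "{u, v} \<in> E"
  note uv = simple_graph_doubletonD[OF sg e]
  have sub: "subgraph {u, v} {{u, v}} V E" unfolding subgraph_def using uv e by auto
  obtain B F where B: "is_block V E B F" "{u, v} \<subseteq> B" "{{u, v}} \<subseteq> F"
    by (rule block_containing_exists[OF sg sub connected_graph_edge no_cut_vertex_edge[OF uv(1)]])
  then obtain a b c where abc: "a \<noteq> b" "b \<noteq> c" "a \<noteq> c" "F = {{a, b}, {b, c}, {a, c}}"
    using assms(2) unfolding triangle_cactus_def is_triangle_graph_def by blast
  have "F \<subseteq> E" using B(1) unfolding is_block_def subgraph_def by blast
  moreover have "{u, v} \<in> F" using B(3) by simp
  then have "\<exists>w. {u, w} \<in> F \<and> {v, w} \<in> F \<and> w \<noteq> u \<and> w \<noteq> v"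
    using abc uv(1) by (auto simp: doubleton_eq_iff insert_commute)
  ultimately show "\<exists>w. {u, w} \<in> E \<and> {v, w} \<in> E \<and> w \<noteq> u \<and> w \<noteq> v" by blast
qed

lemma triangle_cactus_no_long_cycles:
  assumes sg: "simple_graph V E" and "triangle_cactus V E"
  shows "no_long_cycles E"
  unfolding no_long_cycles_def
proof (intro allI impI notI)
  fix vs assume vs: "distinct vs" "4 \<le> length vs" "cycle_edges vs \<subseteq> E"
  have "set vs \<subseteq> V"
  proof
    fix x assume "x \<in> set vs"
    then obtain i where i: "i < length vs" "x = vs ! i" by (auto simp: in_set_conv_nth)
    then have "{vs ! i, vs ! ((i + 1) mod length vs)} \<in> E"
      using vs(3) unfolding cycle_edges_subset_iff by blast
    then show "x \<in> V" using i simple_graph_edge_subset[OF sg] by blast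
  qed
  then have sub: "subgraph (set vs) (cycle_edges vs) V E"
    unfolding subgraph_def using vs(3) cycle_edges_subset_set by blast
  have "3 \<le> length vs" using vs(2) by simp
  obtain B F where "is_block V E B F" "set vs \<subseteq> B" "cycle_edges vs \<subseteq> F"
    by (rule block_containing_exists[OF sg sub connected_graph_cycle no_cut_vertex_cycle])
      (use \<open>3 \<le> length vs\<close> vs(1) in auto)
  then obtain a b c where "set vs \<subseteq> {a, b, c}"
    using assms(2) unfolding triangle_cactus_def is_triangle_graph_def by blast
  then have "card (set vs) \<le> card {a, b, c}" by (intro card_mono) simp_all
  also have "\<dots> \<le> 3" by (simp add: card_insert_le_m1)
  finally show False using vs by (simp add: distinct_card)
qed

inductive glued_triangles :: "'a set \<Rightarrow> 'a set set \<Rightarrow> nat \<Rightarrow> bool" where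
  vertex: "glued_triangles {v} {} 0"
| glue: "glued_triangles V E k \<Longrightarrow> c \<in> V \<Longrightarrow> a \<notin> V \<Longrightarrow> b \<notin> V \<Longrightarrow> a \<noteq> b \<Longrightarrow>
    glued_triangles (V \<union> {a, b}) (E \<union> {{a, b}, {a, c}, {b, c}}) (Suc k)"

lemma longest_graph_path_first_neighbours:
  assumes sg: "simple_graph V E" and "no_long_cycles E"
    and p: "graph_path E p" "set p \<subseteq> V" "2 \<le> length p"
    and longest: "\<And>p'. graph_path E p' \<Longrightarrow> set p' \<subseteq> V \<Longrightarrow> length p' \<le> length p"
    and w: "{p ! 0, w} \<in> E"
  shows "w = p ! 1 \<or> (2 < length p \<and> w = p ! 2)"
proof -
  note w' = simple_graph_doubletonD[OF sg w]
  have "p \<noteq> []" using p(3) by (cases p) auto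
  then have "w \<in> set p"
    using longest_graph_path_first_neighbour[OF p(1,2) _ longest w w'(3)] by blast
  then obtain j where j: "j < length p" "w = p ! j" by (auto simp: in_set_conv_nth)
  have "j \<noteq> 0" using j w'(1) by (metis)
  moreover have "\<not> 3 \<le> j"
  proof
    assume "3 \<le> j"
    have "cycle_edges (take (Suc j) p) \<subseteq> E"
      using graph_path_closing_edge[OF p(1) j(1)] w j(2) by (simp add: insert_commute)
    moreover have "distinct (take (Suc j) p)" "4 \<le> length (take (Suc j) p)"
      using p(1) j(1) \<open>3 \<le> j\<close> unfolding graph_path_def by auto
    ultimately show False using assms(2) unfolding no_long_cycles_def by blast
  qed
  ultimately have "j = 1 \<or> j = 2" by auto
  then show ?thesis using j by auto
qed

text \<open>The first two vertices of a longest path span a triangle whose third vertex is the only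
  other neighbour of either.\<close>

lemma leaf_triangle_exists:
  assumes sg: "simple_graph V E" and "{u, v} \<in> E"
    and triangles: "edges_in_triangles E" and no_long: "no_long_cycles E"
  obtains a b c where "a \<noteq> b" "a \<noteq> c" "b \<noteq> c" "{a, b} \<in> E" "{a, c} \<in> E" "{b, c} \<in> E"
    "\<And>z. {a, z} \<in> E \<Longrightarrow> z = b \<or> z = c" "\<And>z. {b, z} \<in> E \<Longrightarrow> z = a \<or> z = c"
proof -
  note uv = simple_graph_doubletonD[OF sg assms(2)]
  have "graph_path E [u, v]" "set [u, v] \<subseteq> V" using uv assms(2) unfolding graph_path_def by auto
  then obtain p where p: "graph_path E p" "set p \<subseteq> V" "length [u, v] \<le> length p"
    and longest: "\<And>p'. graph_path E p' \<Longrightarrow> set p' \<subseteq> V \<Longrightarrow> length p' \<le> length p"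
    using longest_graph_path_exists[of V E "[u, v]"] sg unfolding simple_graph_def by blast
  have p2: "2 \<le> length p" using p(3) by simp
  have first: "w = p ! 1 \<or> (2 < length p \<and> w = p ! 2)" if "{p ! 0, w} \<in> E" for w
    using longest_graph_path_first_neighbours[OF sg no_long p(1,2) p2, of w] longest that by blast
  have "{p ! 0, p ! 1} \<in> E" using graph_path_nth[OF p(1), of 0] p2 by simp
  then obtain x where x: "{p ! 0, x} \<in> E" "{p ! 1, x} \<in> E" "x \<noteq> p ! 0" "x \<noteq> p ! 1"
    using triangles unfolding edges_in_triangles_def by blast
  then have "2 < length p" "x = p ! 2" using first[OF x(1)] by auto
  then obtain a b c rest where abc: "p = a # b # c # rest"
    by (metis Suc_le_length_iff Suc_leI numeral_2_eq_2)
  then have "x = c" using \<open>x = p ! 2\<close> by simp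
  have ab: "{a, b} \<in> E" "{b, c} \<in> E" using p(1) abc by (simp_all add: graph_path_Cons_Cons)
  have ac: "{a, c} \<in> E" using x(1) \<open>x = c\<close> abc by simp
  have distinct: "a \<noteq> b" "a \<noteq> c" "b \<noteq> c" using p(1) abc unfolding graph_path_def by auto
  have Na: "z = b \<or> z = c" if "{a, z} \<in> E" for z using first[of z] that abc by auto
  \<comment> \<open>swapping the first two vertices gives another longest path\<close>
  have "graph_path E (b # a # c # rest)"
    using p(1) ab ac abc by (auto simp: graph_path_Cons_Cons insert_commute)
  moreover have "set (b # a # c # rest) \<subseteq> V" "2 \<le> length (b # a # c # rest)" using p(2) abc by auto
  moreover have "\<And>p'. graph_path E p' \<Longrightarrow> set p' \<subseteq> V \<Longrightarrow> length p' \<le> length (b # a # c # rest)"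
    using longest abc by simp
  ultimately have Nb: "z = a \<or> z = c" if "{b, z} \<in> E" for z
    using longest_graph_path_first_neighbours[OF sg no_long, of "b # a # c # rest" z] that by auto
  show thesis using that distinct ab ac Na Nb by blast
qed

lemma leaf_triangle_removal:
  assumes sg: "simple_graph V E" and con: "connected_graph V E"
    and distinct: "a \<noteq> b" "a \<noteq> c" "b \<noteq> c" and edges: "{a, b} \<in> E" "{a, c} \<in> E" "{b, c} \<in> E"
    and Na: "\<And>z. {a, z} \<in> E \<Longrightarrow> z = b \<or> z = c" and Nb: "\<And>z. {b, z} \<in> E \<Longrightarrow> z = a \<or> z = c"
  defines "E' \<equiv> {e \<in> E. a \<notin> e \<and> b \<notin> e}"
  shows "E = E' \<union> {{a, b}, {a, c}, {b, c}}" and "simple_graph (V - {a, b}) E'"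
    and "connected_graph (V - {a, b}) E'"
proof -
  have abc: "a \<in> V" "b \<in> V" "c \<in> V" using simple_graph_doubletonD[OF sg] edges by blast+
  have other_end: "\<exists>z. e = {x, z}" if e: "e \<in> E" "x \<in> e" for e x
  proof -
    obtain s t where st: "s \<noteq> t" "s \<in> V" "t \<in> V" "e = {s, t}"
      by (rule simple_graph_edgeE[OF sg e(1)])
    then show ?thesis using e(2) by (cases "x = s") (auto simp: insert_commute)
  qed
  have at_a: "e = {a, b} \<or> e = {a, c}" if "e \<in> E" "a \<in> e" for e
    using other_end[OF that] Na that(1) by blast
  have at_b: "e = {a, b} \<or> e = {b, c}" if e: "e \<in> E" "b \<in> e" for e
  proof -
    obtain z where "e = {b, z}" using other_end[OF e] by blast
    then show ?thesis using Nb[of z] e(1) by (auto simp: insert_commute)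
  qed
  show "E = E' \<union> {{a, b}, {a, c}, {b, c}}"
  proof
    show "E \<subseteq> E' \<union> {{a, b}, {a, c}, {b, c}}" using at_a at_b unfolding E'_def by blast
  qed (use edges in \<open>auto simp: E'_def\<close>)
  show "simple_graph (V - {a, b}) E'"
    unfolding simple_graph_def
  proof (intro conjI ballI)
    fix e assume "e \<in> E'"
    then obtain s t where "s \<noteq> t" "s \<in> V" "t \<in> V" "e = {s, t}" "a \<notin> e" "b \<notin> e"
      using simple_graph_edgeE[OF sg] unfolding E'_def by blast
    then show "\<exists>u v. u \<noteq> v \<and> u \<in> V - {a, b} \<and> v \<in> V - {a, b} \<and> e = {u, v}" by blast
  qed (use sg in \<open>simp add: simple_graph_def\<close>)
  \<comment> \<open>collapse the leaf triangle onto \<open>c\<close>\<close>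
  let ?g = "\<lambda>z. if z = a \<or> z = b then c else z"
  show "connected_graph (V - {a, b}) E'"
  proof (rule connected_graph_retraction[OF con, where g = ?g])
    fix x y assume "x \<in> V" "y \<in> V" "{x, y} \<in> E"
    then show "?g x = ?g y \<or> {?g x, ?g y} \<in> E'"
      using at_a[of "{x, y}"] at_b[of "{x, y}"] distinct
        unfolding E'_def by (auto simp: doubleton_eq_iff)
  qed (use abc distinct in auto)
qed

lemma leaf_triangle_removal_edges_in_triangles:
  assumes sg: "simple_graph V E" and triangles: "edges_in_triangles E"
    and Na: "\<And>z. {a, z} \<in> E \<Longrightarrow> z = b \<or> z = c" and Nb: "\<And>z. {b, z} \<in> E \<Longrightarrow> z = a \<or> z = c"
  shows "edges_in_triangles {e \<in> E. a \<notin> e \<and> b \<notin> e}"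
  unfolding edges_in_triangles_def
proof (intro allI impI)
  fix s t assume "{s, t} \<in> {e \<in> E. a \<notin> e \<and> b \<notin> e}"
  then have st: "{s, t} \<in> E" "s \<notin> {a, b}" "t \<notin> {a, b}" by auto
  have "s \<noteq> t" using simple_graph_doubletonD[OF sg st(1)] by simp
  obtain w where w: "{s, w} \<in> E" "{t, w} \<in> E" "w \<noteq> s" "w \<noteq> t"
    using triangles st(1) unfolding edges_in_triangles_def by blast
  have "w \<noteq> a"
  proof
    assume "w = a"
    then have "s = b \<or> s = c" "t = b \<or> t = c" using w(1,2) Na by (simp_all add: insert_commute)
    then show False using st \<open>s \<noteq> t\<close> by auto
  qed
  moreover have "w \<noteq> b"
  proof
    assume "w = b"
    then have "s = a \<or> s = c" "t = a \<or> t = c" using w(1,2) Nb by (simp_all add: insert_commute)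
    then show False using st \<open>s \<noteq> t\<close> by auto
  qed
  ultimately show "\<exists>w. {s, w} \<in> {e \<in> E. a \<notin> e \<and> b \<notin> e} \<and> {t, w} \<in> {e \<in> E. a \<notin> e \<and> b \<notin> e} \<and>
      w \<noteq> s \<and> w \<noteq> t"
    using w st by auto
qed

lemma glued_triangles_exists:
  assumes "simple_graph V E" "connected_graph V E" "edges_in_triangles E" "no_long_cycles E"
  shows "\<exists>k. glued_triangles V E k"
  using assms
proof (induction "card V" arbitrary: V E rule: less_induct)
  case less
  note sg = less.prems(1) and con = less.prems(2)
  have fin: "finite V" using sg unfolding simple_graph_def by simp
  obtain v where v: "v \<in> V" using con unfolding connected_graph_def by blast
  show ?case
  proof (cases "V = {v}")
    case True
    then have "E = {}" using simple_graph_edgeE[OF sg] by (metis equals0I singletonD)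
    then have "glued_triangles V E 0" using True glued_triangles.vertex by simp
    then show ?thesis by blast
  next
    case False
    then obtain w where "w \<in> V" "w \<noteq> v" using v by blast
    then obtain y where "{v, y} \<in> E" using connected_graph_has_edge[OF con v] by blast
    then obtain a b c where abc: "a \<noteq> b" "a \<noteq> c" "b \<noteq> c" "{a, b} \<in> E" "{a, c} \<in> E" "{b, c} \<in> E"
      and Na: "\<And>z. {a, z} \<in> E \<Longrightarrow> z = b \<or> z = c" and Nb: "\<And>z. {b, z} \<in> E \<Longrightarrow> z = a \<or> z = c"
      using leaf_triangle_exists[OF sg _ less.prems(3,4)] by blast
    define E' where "E' = {e \<in> E. a \<notin> e \<and> b \<notin> e}"
    note removal = leaf_triangle_removal[OF sg con abc Na Nb, folded E'_def]
    have "edges_in_triangles E'"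
      unfolding E'_def by (rule leaf_triangle_removal_edges_in_triangles[OF sg less.prems(3) Na Nb])
    moreover have "no_long_cycles E'"
      using less.prems(4) unfolding no_long_cycles_def E'_def by blast
    moreover have V: "a \<in> V" "b \<in> V" "c \<in> V" using simple_graph_doubletonD[OF sg] abc by blast+
    then have "card (V - {a, b}) < card V" using fin by (intro psubset_card_mono) auto
    ultimately obtain k where "glued_triangles (V - {a, b}) E' k"
      using less.hyps removal(2,3) by blast
    then have "glued_triangles (V - {a, b} \<union> {a, b}) (E' \<union> {{a, b}, {a, c}, {b, c}}) (Suc k)"
      using V abc by (intro glued_triangles.glue) auto
    moreover have "V - {a, b} \<union> {a, b} = V" using V by auto
    ultimately show ?thesis using removal(1) by auto
  qed
qed

lemma triangle_cactus_glued_triangles: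
  assumes "simple_graph V E" "triangle_cactus V E"
  obtains k where "glued_triangles V E k"
  using glued_triangles_exists[OF assms(1) _ triangle_cactus_edges_in_triangles[OF assms]
      triangle_cactus_no_long_cycles[OF assms]] assms(2)
  unfolding triangle_cactus_def by blast

subsection \<open>Counting triangles\<close>

lemma glued_triangles_simple_graph: "glued_triangles V E k \<Longrightarrow> simple_graph V E"
proof (induction rule: glued_triangles.induct)
  case (glue V E k c a b)
  then have "a \<noteq> c" "b \<noteq> c" by auto
  with glue show ?case by (auto simp: simple_graph_iff_card)
qed (simp add: simple_graph_iff_card)

definition triangle_set :: "'a set \<Rightarrow> 'a set set \<Rightarrow> 'a set set" where
  "triangle_set V E = {T. T \<subseteq> V \<and> card T = 3 \<and> (\<forall>x\<in>T. \<forall>y\<in>T. x \<noteq> y \<longrightarrow> {x, y} \<in> E)}"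

lemma triangle_set_glue:
  assumes edges: "\<forall>e\<in>E. e \<subseteq> V" and "c \<in> V" "a \<notin> V" "b \<notin> V" "a \<noteq> b"
  shows "triangle_set (V \<union> {a, b}) (E \<union> {{a, b}, {a, c}, {b, c}}) =
    insert {a, b, c} (triangle_set V E)"
    (is "triangle_set ?V ?E = _")
proof
  have "a \<noteq> c" "b \<noteq> c" using assms(2-4) by auto
  then have card_abc: "card {a, b, c} = 3" using assms(5) by simp
  moreover have "{a, b, c} \<subseteq> ?V" using assms(2) by simp
  moreover have "\<forall>x\<in>{a, b, c}. \<forall>y\<in>{a, b, c}. x \<noteq> y \<longrightarrow> {x, y} \<in> ?E" by (auto simp: insert_commute)
  ultimately have "{a, b, c} \<in> triangle_set ?V ?E" unfolding triangle_set_def by blast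
  moreover have "triangle_set V E \<subseteq> triangle_set ?V ?E" unfolding triangle_set_def by auto
  ultimately show "insert {a, b, c} (triangle_set V E) \<subseteq> triangle_set ?V ?E" by blast
  have Na: "y = b \<or> y = c" if "{a, y} \<in> ?E" for y
    using that edges assms(3) by (auto simp: doubleton_eq_iff)
  have Nb: "y = a \<or> y = c" if "{b, y} \<in> ?E" for y
    using that edges assms(4) by (auto simp: doubleton_eq_iff)
  show "triangle_set ?V ?E \<subseteq> insert {a, b, c} (triangle_set V E)"
  proof
    fix T assume "T \<in> triangle_set ?V ?E"
    then have T: "card T = 3" "T \<subseteq> ?V" and Te: "\<And>x y. x \<in> T \<Longrightarrow> y \<in> T \<Longrightarrow> x \<noteq> y \<Longrightarrow> {x, y} \<in> ?E"
      unfolding triangle_set_def by auto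
    show "T \<in> insert {a, b, c} (triangle_set V E)"
    proof (cases "a \<in> T \<or> b \<in> T")
      case True
      have "T \<subseteq> {a, b, c}"
      proof
        fix y assume "y \<in> T"
        show "y \<in> {a, b, c}"
        proof (cases "a \<in> T")
          case True
          then show ?thesis using Na[of y] Te[of a y] \<open>y \<in> T\<close> by auto
        next
          case False
          then have "b \<in> T" using \<open>a \<in> T \<or> b \<in> T\<close> by simp
          then show ?thesis using Nb[of y] Te[of b y] \<open>y \<in> T\<close> by auto
        qed
      qed
      then have "T = {a, b, c}" using T(1) card_abc by (simp add: card_subset_eq)
      then show ?thesis by simp
    next
      case False
      then have "T \<subseteq> V" using T(2) by auto
      moreover have "{x, y} \<in> E" if "x \<in> T" "y \<in> T" "x \<noteq> y" for x y
        using Te[OF that] that False by (auto simp: doubleton_eq_iff)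
      ultimately show ?thesis using T(1) unfolding triangle_set_def by auto
    qed
  qed
qed

lemma glued_triangles_num_triangles: "glued_triangles V E k \<Longrightarrow> num_triangles V E = k"
proof (induction rule: glued_triangles.induct)
  case (vertex v)
  have "card T \<le> 1" if "T \<subseteq> {v}" for T :: "'a set" using card_mono[OF _ that] by simp
  then show ?case unfolding num_triangles_def by fastforce
next
  case (glue V E k c a b)
  have sg: "simple_graph V E" by (rule glued_triangles_simple_graph[OF glue.hyps(1)])
  have "triangle_set (V \<union> {a, b}) (E \<union> {{a, b}, {a, c}, {b, c}}) =
      insert {a, b, c} (triangle_set V E)"
    using simple_graph_edge_subset[OF sg] glue.hyps by (intro triangle_set_glue) auto
  moreover have "{a, b, c} \<notin> triangle_set V E" using glue.hyps(3) unfolding triangle_set_def by auto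
  moreover have "finite (triangle_set V E)"
    using sg unfolding simple_graph_def triangle_set_def
      by (auto intro: finite_subset[of _ "Pow V"])
  ultimately show ?case
    using glue.IH unfolding num_triangles_def triangle_set_def[symmetric] by simp
qed

subsection \<open>Edge-disjoint cycles in the cone over glued triangles\<close>

lemma simple_graph_join_K1:
  assumes "simple_graph V E"
  shows "simple_graph (join_K1_V V) (join_K1_E V E)"
proof -
  have "card e = 2 \<and> e \<subseteq> join_K1_V V" if "e \<in> join_K1_E V E" for e
  proof (cases "e \<in> image Some ` E")
    case True
    then obtain e' where e': "e' \<in> E" "e = Some ` e'" by blast
    then show ?thesis using assms unfolding simple_graph_iff_card join_K1_V_def
      by (auto simp: card_image)
  next
    case False
    then show ?thesis using that unfolding join_K1_E_def join_K1_V_def by auto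
  qed
  then show ?thesis using assms unfolding simple_graph_iff_card join_K1_V_def by auto
qed

lemma join_K1_E_glue:
  "join_K1_E (V \<union> {a, b}) (E \<union> {{a, b}, {a, c}, {b, c}}) =
    join_K1_E V E \<union>
      {{Some a, Some b}, {Some a, Some c}, {Some b, Some c}, {None, Some a}, {None, Some b}}"
proof -
  have "{{None, Some v} | v. v \<in> V \<union> {a, b}} =
      {{None, Some v} | v. v \<in> V} \<union> {{None, Some a}, {None, Some b}}"
    by blast
  then show ?thesis unfolding join_K1_E_def by (simp add: image_Un insert_commute Un_ac)
qed

lemma join_K1_E_avoids:
  assumes "simple_graph V E" "a \<notin> V" "e \<in> join_K1_E V E"
  shows "Some a \<notin> e"
  using simple_graph_edge_subset[OF simple_graph_join_K1[OF assms(1)] assms(3)] assms(2)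
  unfolding join_K1_V_def by auto

lemma glued_triangles_disjoint_cycles:
  "glued_triangles V E k \<Longrightarrow>
    \<exists>\<C>. finite \<C> \<and> \<C> \<subseteq> {C. is_cycle (join_K1_E V E) C} \<and> pairwise disjnt \<C> \<and> card \<C> = k"
proof (induction rule: glued_triangles.induct)
  case (vertex v)
  show ?case by (rule exI[of _ "{}"]) simp
next
  case (glue V E k c a b)
  obtain \<C> where \<C>: "finite \<C>" "\<C> \<subseteq> {C. is_cycle (join_K1_E V E) C}"
    "pairwise disjnt \<C>" "card \<C> = k"
    using glue.IH by blast
  let ?J' = "join_K1_E (V \<union> {a, b}) (E \<union> {{a, b}, {a, c}, {b, c}})"
  define T where "T = {{Some a, Some b}, {Some b, Some c}, {Some c, Some a}}"
  have sg: "simple_graph V E" by (rule glued_triangles_simple_graph[OF glue.hyps(1)])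
  have "a \<noteq> c" "b \<noteq> c" using glue.hyps by auto
  then have "is_cycle ?J' T" unfolding T_def join_K1_E_glue using glue.hyps(5)
    by (intro is_cycle_triangle) (auto simp: insert_commute)
  moreover have "is_cycle ?J' C" if "C \<in> \<C>" for C
  proof -
    have C: "is_cycle (join_K1_E V E) C" using that \<C>(2) by blast
    then have "C \<subseteq> ?J'" unfolding join_K1_E_glue using is_cycle_subset by blast
    with C show ?thesis by (rule is_cycle_mono)
  qed
  moreover have "disjnt T C" if "C \<in> \<C>" for C
  proof -
    have "C \<subseteq> join_K1_E V E" using is_cycle_subset \<open>C \<in> \<C>\<close> \<C>(2) by blast
    then have "Some a \<notin> e" "Some b \<notin> e" if "e \<in> C" for e
      using join_K1_E_avoids[OF sg glue.hyps(3)] join_K1_E_avoids[OF sg glue.hyps(4)] that by blast+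
    then show ?thesis unfolding disjnt_def T_def by auto
  qed
  moreover have "T \<notin> \<C>" using calculation(3) unfolding T_def disjnt_def by auto
  ultimately show ?case using \<C>
    by (intro exI[of _ "insert T \<C>"]) (auto simp: pairwise_insert disjnt_sym)
qed

lemma join_K1_E_glue_edges_at:
  assumes sg: "simple_graph V E" and new: "c \<in> V" "a \<notin> V" "b \<notin> V" "a \<noteq> b"
    and e: "e \<in> join_K1_E (V \<union> {a, b}) (E \<union> {{a, b}, {a, c}, {b, c}})"
  shows "Some a \<in> e \<Longrightarrow> e \<in> {{Some a, Some b}, {Some a, Some c}, {None, Some a}}"
    and "Some b \<in> e \<Longrightarrow> e \<in> {{Some a, Some b}, {Some b, Some c}, {None, Some b}}"
    and "Some a \<notin> e \<Longrightarrow> Some b \<notin> e \<Longrightarrow> e \<in> join_K1_E V E"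
proof -
  have "a \<noteq> c" "b \<noteq> c" using new by auto
  consider "e \<in> join_K1_E V E"
    | "e \<in> {{Some a, Some b}, {Some a, Some c}, {Some b, Some c}, {None, Some a}, {None, Some b}}"
    using e unfolding join_K1_E_glue by blast
  note cases = this
  show "Some a \<in> e \<Longrightarrow> e \<in> {{Some a, Some b}, {Some a, Some c}, {None, Some a}}"
    using cases join_K1_E_avoids[OF sg new(2)] \<open>a \<noteq> b\<close> \<open>a \<noteq> c\<close> by cases auto
  show "Some b \<in> e \<Longrightarrow> e \<in> {{Some a, Some b}, {Some b, Some c}, {None, Some b}}"
    using cases join_K1_E_avoids[OF sg new(3)] \<open>a \<noteq> b\<close> \<open>b \<noteq> c\<close> by cases auto
  show "Some a \<notin> e \<Longrightarrow> Some b \<notin> e \<Longrightarrow> e \<in> join_K1_E V E"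
    using cases by cases auto
qed

lemma glue_merge_new_cycles:
  assumes sg: "simple_graph V E" and new: "c \<in> V" "a \<notin> V" "b \<notin> V" "a \<noteq> b"
  defines "J' \<equiv> join_K1_E (V \<union> {a, b}) (E \<union> {{a, b}, {a, c}, {b, c}})"
  assumes C1: "is_cycle J' C1" "Some a \<in> \<Union>C1" "Some b \<notin> \<Union>C1"
    and C2: "is_cycle J' C2" "Some b \<in> \<Union>C2" "Some a \<notin> \<Union>C2"
    and disjoint: "C1 \<inter> C2 = {}"
  obtains C where "is_cycle (join_K1_E V E) C" "C \<subseteq> C1 \<union> C2"
proof -
  note at = join_K1_E_glue_edges_at[OF sg new, folded J'_def]
  have in_C1: "e \<in> {{Some a, Some c}, {Some a, None}}" if "e \<in> C1" "Some a \<in> e" for e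
    using at(1)[OF subsetD[OF is_cycle_subset[OF C1(1)] that(1)] that(2)] that(1) C1(3)
      by (auto simp: insert_commute)
  have in_C2: "e \<in> {{Some b, Some c}, {Some b, None}}" if "e \<in> C2" "Some b \<in> e" for e
    using at(2)[OF subsetD[OF is_cycle_subset[OF C2(1)] that(1)] that(2)] that(1) C2(3)
      by (auto simp: insert_commute)
  \<comment> \<open>a cycle uses two edges at each of its vertices, so both candidates occur\<close>
  have "{Some a, Some c} \<in> C1 \<and> {Some a, None} \<in> C1"
    using is_cycle_two_edges_at[OF C1(1)] C1(2) in_C1 by blast
  moreover have "{Some b, Some c} \<in> C2 \<and> {Some b, None} \<in> C2"
    using is_cycle_two_edges_at[OF C2(1)] C2(2) in_C2 by blast
  ultimately obtain C where C: "is_cycle ((C1 - {{Some a, Some c}, {Some a, None}}) \<union>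
      (C2 - {{Some b, Some c}, {Some b, None}})) C" (is "is_cycle ?D C")
    using cycle_in_merged_cycles[OF C1(1) C2(1) disjoint, of "Some a" "Some c" None "Some b"]
      in_C1 in_C2 C1(3) C2(3)
    by blast
  have D: "?D \<subseteq> join_K1_E V E"
  proof
    fix e assume e: "e \<in> ?D"
    then consider "e \<in> C1" "e \<notin> {{Some a, Some c}, {Some a, None}}"
      | "e \<in> C2" "e \<notin> {{Some b, Some c}, {Some b, None}}" by blast
    then have "Some a \<notin> e \<and> Some b \<notin> e"
    proof cases
      case 1
      then show ?thesis using in_C1[of e] C1(3) by auto
    next
      case 2
      then show ?thesis using in_C2[of e] C2(3) by auto
    qed
    moreover have "e \<in> J'" using e is_cycle_subset[OF C1(1)] is_cycle_subset[OF C2(1)] by blast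
    ultimately show "e \<in> join_K1_E V E" using at(3) by blast
  qed
  have "C \<subseteq> join_K1_E V E" using is_cycle_subset[OF C] D by (rule subset_trans)
  then have "is_cycle (join_K1_E V E) C" by (rule is_cycle_mono[OF C])
  moreover have "C \<subseteq> C1 \<union> C2" using is_cycle_subset[OF C] by blast
  ultimately show thesis by (rule that)
qed

lemma card_Un_subsingletons:
  assumes A: "\<And>x y. x \<in> A \<Longrightarrow> y \<in> A \<Longrightarrow> x = y" and B: "\<And>x y. x \<in> B \<Longrightarrow> y \<in> B \<Longrightarrow> x = y"
    and "\<not> card (A \<union> B) \<le> 1"
  obtains x y where "x \<in> A" "y \<in> B" "x \<noteq> y" "A \<union> B = {x, y}"
proof -
  have "A = {} \<or> (\<exists>x. A = {x})" "B = {} \<or> (\<exists>y. B = {y})" using A B by blast+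
  moreover have "A \<noteq> {}" "B \<noteq> {}" using calculation assms(3) by auto
  ultimately obtain x y where "A = {x}" "B = {y}" by blast
  moreover then have "x \<noteq> y" using assms(3) by auto
  ultimately show thesis using that[of x y] by auto
qed

lemma glue_old_cycles_card_less:
  assumes IH: "\<And>\<C>. \<C> \<subseteq> {C. is_cycle (join_K1_E V E) C} \<Longrightarrow> pairwise disjnt \<C> \<Longrightarrow> card \<C> \<le> k"
    and sg: "simple_graph V E" and new: "c \<in> V" "a \<notin> V" "b \<notin> V" "a \<noteq> b"
  defines "J' \<equiv> join_K1_E (V \<union> {a, b}) (E \<union> {{a, b}, {a, c}, {b, c}})"
  assumes cycles: "\<C> \<subseteq> {C. is_cycle J' C}" and disj: "pairwise disjnt \<C>" and "finite \<C>"
    and C1: "C1 \<in> \<C>" "Some a \<in> \<Union>C1" "Some b \<notin> \<Union>C1"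
    and C2: "C2 \<in> \<C>" "Some b \<in> \<Union>C2" "Some a \<notin> \<Union>C2"
  shows "card {C \<in> \<C>. C \<subseteq> join_K1_E V E} < k"
proof -
  let ?Old = "{C \<in> \<C>. C \<subseteq> join_K1_E V E}"
  have "C1 \<noteq> C2" using C1(2) C2(3) by blast
  then have disjoint: "C \<inter> C' = {}" if "C \<in> \<C>" "C' \<in> \<C>" "C \<noteq> C'" for C C'
    using disj that unfolding pairwise_def disjnt_def by blast
  obtain Cs where Cs: "is_cycle (join_K1_E V E) Cs" "Cs \<subseteq> C1 \<union> C2"
    using glue_merge_new_cycles[OF sg new] C1 C2 cycles disjoint[OF C1(1) C2(1) \<open>C1 \<noteq> C2\<close>]
    unfolding J'_def by blast
  have "C1 \<notin> ?Old" "C2 \<notin> ?Old"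
    using C1(2) C2(2) join_K1_E_avoids[OF sg new(2)] join_K1_E_avoids[OF sg new(3)] by blast+
  then have Cs_disjoint: "Cs \<inter> C = {}" if "C \<in> ?Old" for C
    using Cs(2) that disjoint[OF C1(1), of C] disjoint[OF C2(1), of C] by blast
  have "Cs \<notin> ?Old" using Cs_disjoint is_cycle_nonempty[OF Cs(1)] by blast
  have "insert Cs ?Old \<subseteq> {C. is_cycle (join_K1_E V E) C}"
    using Cs(1) cycles is_cycle_mono by blast
  moreover have "pairwise disjnt (insert Cs ?Old)"
  proof -
    have "pairwise disjnt ?Old" using disj by (rule pairwise_subset) blast
    moreover have "disjnt Cs C \<and> disjnt C Cs" if "C \<in> ?Old" for C
      using Cs_disjoint[OF that] unfolding disjnt_def by blast
    ultimately show ?thesis by (simp add: pairwise_insert)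
  qed
  ultimately have "card (insert Cs ?Old) \<le> k" by (rule IH)
  then show ?thesis using \<open>Cs \<notin> ?Old\<close> \<open>finite \<C>\<close> by simp
qed

text \<open>The new vertices \<open>a\<close> and \<open>b\<close> have degree three in the cone, so each lies on at most one
  cycle of a packing; if two packed cycles use them, they can be merged into one old cycle.\<close>

lemma glue_disjoint_cycles_card_le:
  assumes IH: "\<And>\<C>. \<C> \<subseteq> {C. is_cycle (join_K1_E V E) C} \<Longrightarrow> pairwise disjnt \<C> \<Longrightarrow> card \<C> \<le> k"
    and sg: "simple_graph V E" and new: "c \<in> V" "a \<notin> V" "b \<notin> V" "a \<noteq> b"
  defines "J' \<equiv> join_K1_E (V \<union> {a, b}) (E \<union> {{a, b}, {a, c}, {b, c}})"
  assumes cycles: "\<C> \<subseteq> {C. is_cycle J' C}" and disj: "pairwise disjnt \<C>"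
  shows "card \<C> \<le> Suc k"
proof -
  note at = join_K1_E_glue_edges_at[OF sg new, folded J'_def]
  have "finite J'" unfolding J'_def join_K1_E_glue
    using simple_graph_finite_edges[OF simple_graph_join_K1[OF sg]] by simp
  then have fin: "finite \<C>"
    using cycles is_cycle_subset by (blast intro: finite_subset[of _ "Pow J'"])
  define Old where "Old = {C \<in> \<C>. C \<subseteq> join_K1_E V E}"
  define A where "A = {C \<in> \<C>. Some a \<in> \<Union>C}"
  define B where "B = {C \<in> \<C>. Some b \<in> \<Union>C}"
  have "Old \<subseteq> {C. is_cycle (join_K1_E V E) C}" using cycles is_cycle_mono unfolding Old_def by blast
  moreover have "pairwise disjnt Old" using disj unfolding Old_def by (rule pairwise_subset) blast
  ultimately have Old_le: "card Old \<le> k" by (rule IH)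
  have "finite (Old \<union> (A \<union> B))" using fin unfolding Old_def A_def B_def by auto
  moreover have "\<C> \<subseteq> Old \<union> (A \<union> B)"
    using cycles at(3) is_cycle_subset unfolding Old_def A_def B_def by blast
  ultimately have "card \<C> \<le> card (Old \<union> (A \<union> B))" by (rule card_mono)
  also have "\<dots> \<le> card Old + card (A \<union> B)" by (rule card_Un_le)
  finally have card_le: "card \<C> \<le> card Old + card (A \<union> B)" .
  have cyc: "\<forall>C\<in>\<C>. is_cycle J' C" using cycles by blast
  have A_unique: "C = C'" if "C \<in> A" "C' \<in> A" for C C'
    using disjoint_cycles_through_vertex_unique[OF cyc disj at(1)] that unfolding A_def by blast
  have B_unique: "C = C'" if "C \<in> B" "C' \<in> B" for C C'
    using disjoint_cycles_through_vertex_unique[OF cyc disj at(2)] that unfolding B_def by blast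
  show ?thesis
  proof (cases "card (A \<union> B) \<le> 1")
    case False
    obtain C1 C2 where C12: "C1 \<in> A" "C2 \<in> B" "C1 \<noteq> C2" "A \<union> B = {C1, C2}"
      by (rule card_Un_subsingletons[OF A_unique B_unique False])
    then have "C1 \<notin> B" "C2 \<notin> A" using A_unique B_unique by blast+
    then have "C1 \<in> \<C>" "Some a \<in> \<Union>C1" "Some b \<notin> \<Union>C1" "C2 \<in> \<C>" "Some b \<in> \<Union>C2" "Some a \<notin> \<Union>C2"
      using C12(1,2) unfolding A_def B_def by auto
    then have "card Old < k"
      using glue_old_cycles_card_less[OF IH sg new cycles[unfolded J'_def] disj fin]
        unfolding Old_def by blast
    moreover have "card (A \<union> B) = 2" using C12(3,4) by simp
    ultimately show ?thesis using card_le by linarith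
  qed (use Old_le card_le in linarith)
qed

lemma glued_triangles_disjoint_cycles_card_le:
  "glued_triangles V E k \<Longrightarrow> \<C> \<subseteq> {C. is_cycle (join_K1_E V E) C} \<Longrightarrow> pairwise disjnt \<C> \<Longrightarrow>
    card \<C> \<le> k"
proof (induction arbitrary: \<C> rule: glued_triangles.induct)
  case (vertex v)
  have "\<C> = {}"
  proof (rule ccontr)
    assume "\<C> \<noteq> {}"
    then obtain C where C: "is_cycle (join_K1_E {v} {}) C" using vertex.prems(1) by blast
    have J: "join_K1_E {v} {} = {{None, Some v}}" unfolding join_K1_E_def by blast
    obtain e where e: "e \<in> C" using is_cycle_nonempty[OF C] by blast
    then have "None \<in> e" using is_cycle_subset[OF C] J by blast
    then obtain e1 e2 where "e1 \<in> C" "e2 \<in> C" "e1 \<noteq> e2"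
      using is_cycle_two_edges_at[OF C e] by blast
    moreover have "C \<subseteq> {{None, Some v}}" using is_cycle_subset[OF C] J by simp
    ultimately show False by blast
  qed
  then show ?case by simp
next
  case (glue V E k c a b)
  show ?case
    using glue_disjoint_cycles_card_le[OF glue.IH glued_triangles_simple_graph[OF glue.hyps(1)]
        glue.hyps(2-5) glue.prems] .
qed

lemma phi_eqI:
  assumes "\<C> \<subseteq> {C. is_cycle E C}" "pairwise disjnt \<C>" "card \<C> = k"
    and "\<And>\<C>. \<C> \<subseteq> {C. is_cycle E C} \<Longrightarrow> pairwise disjnt \<C> \<Longrightarrow> card \<C> \<le> k"
  shows "phi V E = k"
proof -
  let ?S = "{card \<C> | \<C>. \<C> \<subseteq> {C. is_cycle E C} \<and> pairwise disjnt \<C>}"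
  have le: "y \<le> k" if "y \<in> ?S" for y
  proof -
    obtain \<D> where "y = card \<D>" "\<D> \<subseteq> {C. is_cycle E C}" "pairwise disjnt \<D>" using \<open>y \<in> ?S\<close> by blast
    then show ?thesis using assms(4) by simp
  qed
  then have "?S \<subseteq> {..k}" by blast
  then have "finite ?S" by (rule finite_subset) simp
  moreover have "k \<in> ?S" unfolding assms(3)[symmetric] using assms(1,2) by blast
  ultimately have "Max ?S = k" using le by (intro Max_eqI)
  then show ?thesis unfolding phi_def by simp
qed

subsection \<open>A non-crossing linear order\<close>

definition noncrossing_order :: "('a \<Rightarrow> real) \<Rightarrow> 'a set set \<Rightarrow> bool" where
  "noncrossing_order f E \<longleftrightarrow>
     (\<forall>u v u' v'. {u, v} \<in> E \<longrightarrow> {u', v'} \<in> E \<longrightarrow> \<not> (f u < f u' \<and> f u' < f v \<and> f v < f v'))"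

lemma finite_gap_above:
  fixes f :: "'a \<Rightarrow> real"
  assumes "finite V"
  obtains d where "d > 0" "\<And>x. x \<in> V \<Longrightarrow> f x \<le> t \<or> t + 3 * d < f x"
proof -
  let ?S = "{f x - t | x. x \<in> V \<and> t < f x}"
  have "finite ?S" using assms by simp
  show thesis
  proof (cases "?S = {}")
    case True
    then show thesis using that[of 1] by force
  next
    case False
    then have pos: "0 < Min ?S" using \<open>finite ?S\<close> by auto
    have "f x \<le> t \<or> t + 3 * (Min ?S / 4) < f x" if "x \<in> V" for x
    proof (cases "t < f x")
      case True
      then have "Min ?S \<le> f x - t" using \<open>finite ?S\<close> that by (intro Min_le) auto
      then show ?thesis using pos by simp
    qed simp
    then show thesis using that[of "Min ?S / 4"] pos by simp
  qed
qed

lemma noncrossing_order_add_triangle: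
  assumes edges: "\<And>u v. {u, v} \<in> E \<Longrightarrow> u \<in> V \<and> v \<in> V" and "noncrossing_order f E"
    and agree: "\<And>x. x \<in> V \<Longrightarrow> g x = f x"
    and window: "\<And>x. x \<in> {a, b, c} \<Longrightarrow> lo \<le> g x \<and> g x \<le> hi"
    and gap: "\<And>x. x \<in> V \<Longrightarrow> f x \<le> lo \<or> hi < f x"
  shows "noncrossing_order g (E \<union> {{a, b}, {a, c}, {b, c}})"
  unfolding noncrossing_order_def
proof (intro allI impI notI)
  fix u v u' v'
  assume e: "{u, v} \<in> E \<union> {{a, b}, {a, c}, {b, c}}" "{u', v'} \<in> E \<union> {{a, b}, {a, c}, {b, c}}"
    and cross: "g u < g u' \<and> g u' < g v \<and> g v < g v'"
  have ends: "({x, y} \<in> E \<and> x \<in> V \<and> y \<in> V) \<or> (x \<in> {a, b, c} \<and> y \<in> {a, b, c})"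
    if "{x, y} \<in> E \<union> {{a, b}, {a, c}, {b, c}}" for x y
    using that edges by (auto simp: doubleton_eq_iff)
  consider "{u, v} \<in> E" "u \<in> V" "v \<in> V" "{u', v'} \<in> E" "u' \<in> V" "v' \<in> V"
    | "v \<in> V" "u' \<in> {a, b, c}" "v' \<in> {a, b, c}"
    | "u \<in> {a, b, c}" "v \<in> {a, b, c}" "u' \<in> V"
    | "u \<in> {a, b, c}" "v \<in> {a, b, c}" "u' \<in> {a, b, c}" "v' \<in> {a, b, c}"
    using ends[OF e(1)] ends[OF e(2)] by blast
  then show False
  proof cases
    case 1
    then show False using assms(2) cross agree unfolding noncrossing_order_def by metis
  next
    case 2
    then show False using window[of u'] window[of v'] gap[of v] agree[of v] cross by auto
  next
    case 3
    then show False using window[of u] window[of v] gap[of u'] agree[of u'] cross by auto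
  next
    case 4
    moreover have "u \<noteq> v" "u \<noteq> u'" "u \<noteq> v'" "v \<noteq> u'" "v \<noteq> v'" "u' \<noteq> v'" using cross by auto
    ultimately show False by blast
  qed
qed

text \<open>The new vertices go just to the right of \<open>c\<close>, inside a gap free of old vertices.\<close>

lemma noncrossing_order_glue:
  assumes "finite V" and edges: "\<And>u v. {u, v} \<in> E \<Longrightarrow> u \<in> V \<and> v \<in> V"
    and f: "inj_on f V" "noncrossing_order f E" and new: "c \<in> V" "a \<notin> V" "b \<notin> V" "a \<noteq> b"
  obtains g where "inj_on g (V \<union> {a, b})" "noncrossing_order g (E \<union> {{a, b}, {a, c}, {b, c}})"
proof -
  obtain d where d: "d > 0" "\<And>x. x \<in> V \<Longrightarrow> f x \<le> f c \<or> f c + 3 * d < f x"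
    using finite_gap_above[OF assms(1)] by blast
  define g where "g = f(a := f c + d, b := f c + 2 * d)"
  have "a \<noteq> c" "b \<noteq> c" using new by auto
  then have g: "g a = f c + d" "g b = f c + 2 * d" "g c = f c" "\<And>x. x \<in> V \<Longrightarrow> g x = f x"
    using new unfolding g_def by auto
  have "inj_on g V" using inj_on_cong[of V g f] g(4) f(1) by simp
  moreover have "inj_on g {a, b}" using g(1,2) d(1) by auto
  moreover have "g ` (V - {a, b}) \<inter> g ` ({a, b} - V) = {}" using d g by fastforce
  ultimately have "inj_on g (V \<union> {a, b})" using inj_on_Un[of g V "{a, b}"] by blast
  moreover have "noncrossing_order g (E \<union> {{a, b}, {a, c}, {b, c}})"
  proof (rule noncrossing_order_add_triangle[OF edges f(2) g(4)])
    show "f c \<le> g x \<and> g x \<le> f c + 2 * d" if "x \<in> {a, b, c}" for x using that g(1-3) d(1) by auto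
    show "f x \<le> f c \<or> f c + 2 * d < f x" if "x \<in> V" for x using d that by force
  qed
  ultimately show thesis by (rule that)
qed

lemma glued_triangles_noncrossing_order:
  "glued_triangles V E k \<Longrightarrow> \<exists>f. inj_on f V \<and> noncrossing_order f E"
proof (induction rule: glued_triangles.induct)
  case (vertex v)
  show ?case by (intro exI[of _ "\<lambda>_. 0"]) (simp add: noncrossing_order_def)
next
  case (glue V E k c a b)
  obtain f where f: "inj_on f V" "noncrossing_order f E" using glue.IH by blast
  note sg = glued_triangles_simple_graph[OF glue.hyps(1)]
  have "finite V" using sg unfolding simple_graph_def by simp
  moreover have "\<And>u v. {u, v} \<in> E \<Longrightarrow> u \<in> V \<and> v \<in> V" using simple_graph_doubletonD[OF sg] by blast
  ultimately obtain g where
    "inj_on g (V \<union> {a, b})" "noncrossing_order g (E \<union> {{a, b}, {a, c}, {b, c}})"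
    using noncrossing_order_glue[OF _ _ f glue.hyps(2-5)] by blast
  then show ?case by blast
qed

subsection \<open>Straight-line drawings on a parabola\<close>

lemma planar_straight_line_drawing:
  fixes p :: "'a \<Rightarrow> complex"
  assumes sg: "simple_graph V E" and inj: "inj_on p V"
    and vertex: "\<And>e w. e \<in> E \<Longrightarrow> w \<in> V \<Longrightarrow> p w \<in> convex hull (p ` e) \<Longrightarrow> w \<in> e"
    and crossing: "\<And>e e'. e \<in> E \<Longrightarrow> e' \<in> E \<Longrightarrow> e \<noteq> e' \<Longrightarrow>
      convex hull (p ` e) \<inter> convex hull (p ` e') \<subseteq> p ` (e \<inter> e')"
  shows "planar V E"
proof -
  have "\<forall>e\<in>E. \<exists>uv. fst uv \<noteq> snd uv \<and> fst uv \<in> V \<and> snd uv \<in> V \<and> e = {fst uv, snd uv}"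
    using simple_graph_edgeE[OF sg] by (metis fst_conv snd_conv)
  then obtain ends where ends: "\<And>e. e \<in> E \<Longrightarrow> fst (ends e) \<noteq> snd (ends e) \<and> fst (ends e) \<in> V \<and>
      snd (ends e) \<in> V \<and> e = {fst (ends e), snd (ends e)}"
    using bchoice by metis
  define \<gamma> where "\<gamma> e = linepath (p (fst (ends e))) (p (snd (ends e)))" for e
  have e: "e = {fst (ends e), snd (ends e)}" if "e \<in> E" for e using ends[OF that] by blast
  have image: "path_image (\<gamma> e) = convex hull (p ` e)" if "e \<in> E" for e
    by (subst (2) e[OF that]) (simp add: \<gamma>_def segment_convex_hull)
  have arc: "arc (\<gamma> e)" if "e \<in> E" for e
    using ends[OF that] inj unfolding \<gamma>_def by (simp add: inj_on_eq_iff)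
  have ends_image: "{pathstart (\<gamma> e), pathfinish (\<gamma> e)} = p ` e" if "e \<in> E" for e
    by (subst (2) e[OF that]) (simp add: \<gamma>_def)
  show ?thesis
    unfolding planar_def using inj arc ends_image image vertex crossing
    by (intro exI[of _ p] exI[of _ \<gamma>]) auto
qed

definition parabola :: "real \<Rightarrow> complex" where
  "parabola x = Complex x (x\<^sup>2)"

lemma parabola_chord_point:
  assumes "z \<in> closed_segment (parabola a) (parabola b)"
  shows "Im z = (a + b) * Re z - a * b" "min a b \<le> Re z" "Re z \<le> max a b"
proof -
  obtain u where u: "0 \<le> u" "u \<le> 1" "z = (1 - u) *\<^sub>R parabola a + u *\<^sub>R parabola b"
    using assms in_segment(1) by blast
  have re: "Re z = (1 - u) * a + u * b" and im: "Im z = (1 - u) * a\<^sup>2 + u * b\<^sup>2"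
    using u(3) by (simp_all add: parabola_def)
  show "Im z = (a + b) * Re z - a * b" unfolding re im by (simp add: algebra_simps power2_eq_square)
  have "(1 - u) * min a b + u * min a b \<le> (1 - u) * a + u * b"
    using u(1,2) by (intro add_mono mult_left_mono) auto
  then show "min a b \<le> Re z" unfolding re by (simp add: algebra_simps)
  have "(1 - u) * a + u * b \<le> (1 - u) * max a b + u * max a b"
    using u(1,2) by (intro add_mono mult_left_mono) auto
  then show "Re z \<le> max a b" unfolding re by (simp add: algebra_simps)
qed

lemma parabola_chord_above:
  assumes "z \<in> closed_segment (parabola a) (parabola b)"
  shows "(Re z)\<^sup>2 \<le> Im z"
proof -
  note chord = parabola_chord_point[OF assms]
  have "(Re z - a) * (Re z - b) \<le> 0" using chord(2,3)
    by (cases "a \<le> b") (auto simp: mult_le_0_iff)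
  then show ?thesis using chord(1) by (simp add: algebra_simps power2_eq_square)
qed

lemma parabola_chord_on_parabola:
  assumes "z \<in> closed_segment (parabola a) (parabola b)" "Im z = (Re z)\<^sup>2"
  shows "Re z = a \<or> Re z = b"
proof -
  have "(Re z - a) * (Re z - b) = 0"
    using parabola_chord_point(1)[OF assms(1)] assms(2)
      by (simp add: algebra_simps power2_eq_square)
  then show ?thesis by simp
qed

lemma apex_segment_point:
  assumes "z \<in> closed_segment (Complex 0 (-M)) (parabola s)"
  obtains u where "0 \<le> u" "u \<le> 1" "Re z = u * s" "Im z = - M + u * (s\<^sup>2 + M)"
proof -
  obtain u where u: "0 \<le> u" "u \<le> 1" "z = (1 - u) *\<^sub>R Complex 0 (-M) + u *\<^sub>R parabola s"
    using assms in_segment(1) by blast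
  moreover have "Re z = u * s" "Im z = - M + u * (s\<^sup>2 + M)"
    unfolding u(3) by (simp_all add: parabola_def algebra_simps)
  ultimately show thesis by (intro that) auto
qed

lemma apex_segment_above_parabola:
  assumes "z \<in> closed_segment (Complex 0 (-M)) (parabola s)" "s\<^sup>2 < M" "(Re z)\<^sup>2 \<le> Im z"
  shows "z = parabola s"
proof -
  obtain u where u: "0 \<le> u" "u \<le> 1" "Re z = u * s" "Im z = - M + u * (s\<^sup>2 + M)"
    by (rule apex_segment_point[OF assms(1)])
  have "(u * s)\<^sup>2 \<le> - M + u * (s\<^sup>2 + M)" using assms(3) u by simp
  then have factor: "(1 - u) * (u * s\<^sup>2 - M) \<ge> 0" by (simp add: algebra_simps power2_eq_square)
  have "u * s\<^sup>2 \<le> s\<^sup>2" using u(1,2) mult_left_le_one_le[of "s\<^sup>2" u] by simp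
  then have "u * s\<^sup>2 - M < 0" using assms(2) by simp
  then have "u = 1" using factor u(2) by (simp add: zero_le_mult_iff)
  then show ?thesis using u by (simp add: complex_eq_iff parabola_def)
qed

lemma apex_segments_meet:
  assumes "z \<in> closed_segment (Complex 0 (-M)) (parabola s)"
    and "z \<in> closed_segment (Complex 0 (-M)) (parabola r)"
    and "s \<noteq> r" "s\<^sup>2 < M" "r\<^sup>2 < M"
  shows "z = Complex 0 (-M)"
proof -
  obtain u where u: "0 \<le> u" "Re z = u * s" "Im z = - M + u * (s\<^sup>2 + M)"
    by (rule apex_segment_point[OF assms(1)])
  obtain w where w: "Re z = w * r" "Im z = - M + w * (r\<^sup>2 + M)"
    by (rule apex_segment_point[OF assms(2)])
  have same: "u * s = w * r" "u * (s\<^sup>2 + M) = w * (r\<^sup>2 + M)" using u w by auto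
  have "u * (s\<^sup>2 + M) * r = (w * r) * (r\<^sup>2 + M)" using same(2) by (simp add: algebra_simps)
  then have "u * (s\<^sup>2 + M) * r = (u * s) * (r\<^sup>2 + M)" using same(1) by simp
  then have "u * ((s - r) * (s * r - M)) = 0" by (simp add: algebra_simps power2_eq_square)
  moreover have "2 * (s * r) \<le> s\<^sup>2 + r\<^sup>2" using sum_squares_bound[of s r] by simp
  then have "s * r < M" using assms(4,5) by simp
  ultimately have "u = 0" using assms(3) by simp
  then show ?thesis using u by (simp add: complex_eq_iff)
qed

lemma nested_chord_lines_meet:
  fixes a b c d X :: real
  assumes "a \<le> c" "d \<le> b" "c \<le> X" "X \<le> d" "(a, b) \<noteq> (c, d)"
    and "(a + b) * X - a * b = (c + d) * X - c * d"
  shows "(X = a \<or> X = b) \<and> (X = c \<or> X = d)"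
proof -
  \<comment> \<open>a sum of three non-positive terms\<close>
  have "(X - c) * (d - b) + (c - a) * (X - d) + (c - a) * (d - b) = 0"
    using assms(6) by (simp add: algebra_simps)
  moreover have "(X - c) * (d - b) \<le> 0" "(c - a) * (X - d) \<le> 0" "(c - a) * (d - b) \<le> 0"
    using assms(1-4) by (simp_all add: mult_nonneg_nonpos)
  ultimately have "(X - c) * (d - b) = 0" "(c - a) * (X - d) = 0" "(c - a) * (d - b) = 0"
    by linarith+
  then show ?thesis using assms(5) by (cases "c = a") auto
qed

lemma parabola_chords_meet:
  assumes "a < b" "c < d" "(a, b) \<noteq> (c, d)"
    and "\<not> (a < c \<and> c < b \<and> b < d)" "\<not> (c < a \<and> a < d \<and> d < b)"
    and "z \<in> closed_segment (parabola a) (parabola b)"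
    and "z \<in> closed_segment (parabola c) (parabola d)"
  shows "\<exists>x\<in>{a, b} \<inter> {c, d}. z = parabola x"
proof -
  note ab = parabola_chord_point[OF assms(6)] and cd = parabola_chord_point[OF assms(7)]
  have X: "a \<le> Re z" "Re z \<le> b" "c \<le> Re z" "Re z \<le> d"
    using ab(2,3) cd(2,3) assms(1,2) by auto
  have line: "(a + b) * Re z - a * b = (c + d) * Re z - c * d" using ab(1) cd(1) by simp
  consider "b \<le> c \<or> d \<le> a" | "a \<le> c" "d \<le> b" | "c \<le> a" "b \<le> d"
    using assms(4,5) by linarith
  then have "(Re z = a \<or> Re z = b) \<and> (Re z = c \<or> Re z = d)"
  proof cases
    case 1
    then show ?thesis using X by auto
  next
    case 2
    then show ?thesis using nested_chord_lines_meet[OF 2 X(3,4) assms(3) line] by blast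
  next
    case 3
    then show ?thesis using nested_chord_lines_meet[OF 3 X(1,2) _ line[symmetric]] assms(3) by auto
  qed
  moreover have "Im z = (Re z)\<^sup>2"
    using ab(1) calculation by (auto simp: power2_eq_square algebra_simps)
  ultimately show ?thesis by (auto simp: parabola_def complex_eq_iff)
qed

lemma apex_segment_meets_chord:
  assumes "z \<in> closed_segment (Complex 0 (-M)) (parabola s)" "s\<^sup>2 < M"
    and "z \<in> closed_segment (parabola a) (parabola b)"
  shows "z = parabola s" "s = a \<or> s = b"
proof -
  show "z = parabola s"
    using apex_segment_above_parabola[OF assms(1,2) parabola_chord_above[OF assms(3)]] .
  then show "s = a \<or> s = b"
    using parabola_chord_on_parabola[OF assms(3)] by (simp add: parabola_def)
qed

lemma join_K1_E_cases:
  assumes "simple_graph V E" "e \<in> join_K1_E V E"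
  obtains (apex) s where "s \<in> V" "e = {None, Some s}"
    | (base) u w where "{u, w} \<in> E" "u \<in> V" "w \<in> V" "e = {Some u, Some w}"
proof (cases "e \<in> image Some ` E")
  case True
  then obtain e' where e': "e' \<in> E" "e = Some ` e'" by blast
  obtain u w where "u \<noteq> w" "u \<in> V" "w \<in> V" "e' = {u, w}"
    by (rule simple_graph_edgeE[OF assms(1) e'(1)])
  then show thesis using base e' by simp
next
  case False
  then show thesis using apex assms(2) unfolding join_K1_E_def by blast
qed

definition cone_drawing :: "real \<Rightarrow> ('a \<Rightarrow> real) \<Rightarrow> 'a option \<Rightarrow> complex" where
  "cone_drawing M f x = (case x of None \<Rightarrow> Complex 0 (-M) | Some v \<Rightarrow> parabola (f v))"

lemma cone_drawing_vertex:
  assumes sg: "simple_graph V E" and inj: "inj_on f V" and M: "\<And>v. v \<in> V \<Longrightarrow> (f v)\<^sup>2 < M"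
    and e: "e \<in> join_K1_E V E" and w: "w \<in> join_K1_V V"
    and on_edge: "cone_drawing M f w \<in> convex hull (cone_drawing M f ` e)"
  shows "w \<in> e"
  using sg e
proof (cases rule: join_K1_E_cases)
  case (apex s)
  show ?thesis
  proof (cases w)
    case (Some r)
    then have "r \<in> V" using w unfolding join_K1_V_def by auto
    have "parabola (f r) \<in> closed_segment (Complex 0 (-M)) (parabola (f s))"
      using on_edge Some apex(2) by (simp add: segment_convex_hull cone_drawing_def)
    moreover have "(Re (parabola (f r)))\<^sup>2 \<le> Im (parabola (f r))" by (simp add: parabola_def)
    ultimately have "parabola (f r) = parabola (f s)"
      using apex_segment_above_parabola M[OF apex(1)] by blast
    then have "r = s" using inj \<open>r \<in> V\<close> apex(1) by (simp add: parabola_def inj_on_eq_iff)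
    then show ?thesis using Some apex(2) by simp
  qed (simp add: apex(2))
next
  case (base u v)
  have chord: "cone_drawing M f w \<in> closed_segment (parabola (f u)) (parabola (f v))"
    using on_edge base(4) by (simp add: segment_convex_hull cone_drawing_def)
  show ?thesis
  proof (cases w)
    case None
    have "0 < M" using M[OF base(2)] by (smt (verit) zero_le_power2)
    then show ?thesis using parabola_chord_above[OF chord] None by (simp add: cone_drawing_def)
  next
    case (Some r)
    then have "r \<in> V" using w unfolding join_K1_V_def by auto
    have "f r = f u \<or> f r = f v"
      using parabola_chord_on_parabola[OF chord] Some by (simp add: cone_drawing_def parabola_def)
    then have "r = u \<or> r = v" using inj \<open>r \<in> V\<close> base(2,3) by (auto simp: inj_on_eq_iff)
    then show ?thesis using Some base(4) by auto
  qed
qed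

lemma inj_on_doubleton_sorted:
  fixes f :: "'a \<Rightarrow> real"
  assumes "inj_on f V" "u \<in> V" "w \<in> V" "u \<noteq> w"
  obtains u' w' where "{u', w'} = {u, w}" "f u' < f w'"
proof -
  have "f u \<noteq> f w" using assms by (auto simp: inj_on_eq_iff)
  then show thesis
    using that[of u w] that[of w u] by (cases "f u < f w") (auto simp: insert_commute)
qed

lemma noncrossing_chords_meet:
  assumes inj: "inj_on f V" and nc: "noncrossing_order f E"
    and edges: "{u, w} \<in> E" "{u', w'} \<in> E" "{u, w} \<noteq> {u', w'}"
    and V: "u \<in> V" "w \<in> V" "u' \<in> V" "w' \<in> V" and sorted: "f u < f w" "f u' < f w'"
    and z: "z \<in> closed_segment (parabola (f u)) (parabola (f w))"
      "z \<in> closed_segment (parabola (f u')) (parabola (f w'))"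
  shows "\<exists>x\<in>{u, w} \<inter> {u', w'}. z = parabola (f x)"
proof -
  have "(f u, f w) \<noteq> (f u', f w')" using edges(3) inj V by (auto simp: inj_on_eq_iff)
  moreover have "\<not> (f u < f u' \<and> f u' < f w \<and> f w < f w')"
    "\<not> (f u' < f u \<and> f u < f w' \<and> f w' < f w)"
    using nc edges(1,2) unfolding noncrossing_order_def by blast+
  ultimately obtain x where x: "x \<in> {f u, f w} \<inter> {f u', f w'}" "z = parabola x"
    using parabola_chords_meet[OF sorted _ _ _ z] by blast
  have "\<exists>y\<in>{u, w}. f y = x" "\<exists>y'\<in>{u', w'}. f y' = x" using x(1) by auto
  then obtain y y' where "y \<in> {u, w}" "y' \<in> {u', w'}" "f y = x" "f y' = x" by blast
  moreover have "y \<in> V" "y' \<in> V" using calculation(1,2) V by auto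
  ultimately show ?thesis using x(2) inj by (metis IntI inj_onD)
qed

lemma cone_drawing_chords_cross:
  assumes sg: "simple_graph V E" and inj: "inj_on f V" and nc: "noncrossing_order f E"
    and base: "{u, w} \<in> E" "u \<in> V" "w \<in> V" and base': "{u', w'} \<in> E" "u' \<in> V" "w' \<in> V"
    and ne: "{Some u, Some w} \<noteq> {Some u', Some w'}"
    and z: "z \<in> convex hull (cone_drawing M f ` {Some u, Some w})"
      "z \<in> convex hull (cone_drawing M f ` {Some u', Some w'})"
  shows "z \<in> cone_drawing M f ` ({Some u, Some w} \<inter> {Some u', Some w'})"
proof -
  have "u \<noteq> w" "u' \<noteq> w'" using simple_graph_doubletonD[OF sg] base(1) base'(1) by blast+
  then obtain a b a' b'
    where sorted: "{a, b} = {u, w}" "f a < f b" "{a', b'} = {u', w'}" "f a' < f b'"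
    using inj_on_doubleton_sorted[OF inj] base(2,3) base'(2,3) by metis
  have "Some ` {a, b} = Some ` {u, w}" "Some ` {a', b'} = Some ` {u', w'}"
    using sorted(1,3) by simp_all
  then have ab: "{Some u, Some w} = {Some a, Some b}" "{Some u', Some w'} = {Some a', Some b'}"
    by simp_all
  have "{u, w} \<noteq> {u', w'}"
  proof
    assume "{u, w} = {u', w'}"
    then have "Some ` {u, w} = Some ` {u', w'}" by simp
    then show False using ne by simp
  qed
  then have "{a, b} \<noteq> {a', b'}" using sorted(1,3) by simp
  moreover have "{a, b} \<subseteq> V" "{a', b'} \<subseteq> V" using sorted(1,3) base(2,3) base'(2,3) by auto
  then have "a \<in> V" "b \<in> V" "a' \<in> V" "b' \<in> V" by simp_all
  moreover have "z \<in> closed_segment (parabola (f a)) (parabola (f b))"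
    "z \<in> closed_segment (parabola (f a')) (parabola (f b'))"
    using z unfolding ab by (simp_all add: segment_convex_hull cone_drawing_def)
  ultimately obtain x where "x \<in> {a, b} \<inter> {a', b'}" "z = parabola (f x)"
    using noncrossing_chords_meet[OF inj nc] sorted base(1) base'(1) by metis
  then have "Some x \<in> {Some u, Some w} \<inter> {Some u', Some w'}" "z = cone_drawing M f (Some x)"
    unfolding ab by (auto simp: cone_drawing_def)
  then show ?thesis by blast
qed

lemma cone_drawing_crossing:
  assumes sg: "simple_graph V E" and inj: "inj_on f V" and M: "\<And>v. v \<in> V \<Longrightarrow> (f v)\<^sup>2 < M"
    and nc: "noncrossing_order f E"
    and e: "e \<in> join_K1_E V E" and e': "e' \<in> join_K1_E V E" and "e \<noteq> e'"
  shows "convex hull (cone_drawing M f ` e) \<inter> convex hull (cone_drawing M f ` e') \<subseteq>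
    cone_drawing M f ` (e \<inter> e')"
proof
  let ?p = "cone_drawing M f"
  fix z assume z: "z \<in> convex hull (?p ` e) \<inter> convex hull (?p ` e')"
  have apex_base: "z \<in> ?p ` (e1 \<inter> e2)"
    if "s \<in> V" "e1 = {None, Some s}" "u \<in> V" "w \<in> V" "e2 = {Some u, Some w}"
      "z \<in> convex hull (?p ` e1)" "z \<in> convex hull (?p ` e2)" for e1 e2 s u w
  proof -
    have "z \<in> closed_segment (Complex 0 (-M)) (parabola (f s))"
      "z \<in> closed_segment (parabola (f u)) (parabola (f w))"
      using that by (simp_all add: segment_convex_hull cone_drawing_def)
    then have "z = parabola (f s)" "f s = f u \<or> f s = f w"
      using apex_segment_meets_chord M[OF that(1)] by blast+
    then have "z = ?p (Some s)" "s = u \<or> s = w"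
      using inj that(1,3,4) by (auto simp: cone_drawing_def inj_on_eq_iff)
    then show ?thesis using that(2,5) by auto
  qed
  from sg e show "z \<in> ?p ` (e \<inter> e')"
  proof (cases rule: join_K1_E_cases)
    case (apex s)
    from sg e' show ?thesis
    proof (cases rule: join_K1_E_cases)
      case (apex r)
      then have "s \<noteq> r" using \<open>e \<noteq> e'\<close> \<open>e = {None, Some s}\<close> by auto
      moreover have "z \<in> closed_segment (Complex 0 (-M)) (parabola (f s))"
        "z \<in> closed_segment (Complex 0 (-M)) (parabola (f r))"
        using z \<open>e = {None, Some s}\<close> apex(2) by (simp_all add: segment_convex_hull cone_drawing_def)
      ultimately have "z = ?p None"
        using apex_segments_meet M \<open>s \<in> V\<close> apex(1) inj
          by (auto simp: cone_drawing_def inj_on_eq_iff)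
      then show ?thesis using \<open>e = {None, Some s}\<close> apex(2) by auto
    next
      case (base u w)
      then show ?thesis using apex_base[of s e u w e'] \<open>s \<in> V\<close> \<open>e = {None, Some s}\<close> z by blast
    qed
  next
    case (base u w)
    from sg e' show ?thesis
    proof (cases rule: join_K1_E_cases)
      case (apex r)
      then show ?thesis using apex_base[of r e' u w e] base z by (auto simp: Int_commute)
    next
      case base': (base u' w')
      show ?thesis using z \<open>e \<noteq> e'\<close> unfolding base(4) base'(4)
        by (intro cone_drawing_chords_cross[OF sg inj nc base(1-3) base'(1-3)]) auto
    qed
  qed
qed

lemma planar_join_K1:
  assumes sg: "simple_graph V E" and f: "inj_on f V" "noncrossing_order f E"
  shows "planar (join_K1_V V) (join_K1_E V E)"
proof -
  define M where "M = 1 + (\<Sum>v\<in>V. (f v)\<^sup>2)"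
  have "0 \<le> (\<Sum>v\<in>V. (f v)\<^sup>2)" by (simp add: sum_nonneg)
  then have "0 < M" unfolding M_def by simp
  have M: "(f v)\<^sup>2 < M" if "v \<in> V" for v
  proof -
    have "finite V" using sg unfolding simple_graph_def by simp
    then have "(f v)\<^sup>2 \<le> (\<Sum>v\<in>V. (f v)\<^sup>2)" using member_le_sum[of v V "\<lambda>v. (f v)\<^sup>2"] that by simp
    then show ?thesis unfolding M_def by simp
  qed
  have "inj_on (cone_drawing M f) (join_K1_V V)"
  proof (rule inj_onI)
    fix x y assume "x \<in> join_K1_V V" "y \<in> join_K1_V V" "cone_drawing M f x = cone_drawing M f y"
    moreover have "Complex 0 (-M) \<noteq> parabola t" for t
      using \<open>0 < M\<close> by (simp add: parabola_def complex_eq_iff)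
    ultimately show "x = y" using f(1) unfolding join_K1_V_def
      by (cases x; cases y) (auto simp: cone_drawing_def parabola_def inj_on_eq_iff)
  qed
  then show ?thesis
    by (rule planar_straight_line_drawing[OF simple_graph_join_K1[OF sg]])
      (metis cone_drawing_vertex[OF sg f(1) M], metis cone_drawing_crossing[OF sg f(1) M f(2)])
qed

theorem lemma2p1:
  fixes V :: "'a set" and E :: "'a set set"
  assumes "simple_graph V E" and "triangle_cactus V E"
  shows "planar (join_K1_V V) (join_K1_E V E) \<and>
         phi (join_K1_V V) (join_K1_E V E) = num_triangles V E"
proof -
  obtain k where k: "glued_triangles V E k" using triangle_cactus_glued_triangles[OF assms] .
  obtain f where "inj_on f V" "noncrossing_order f E"
    using glued_triangles_noncrossing_order[OF k] by blast
  then have "planar (join_K1_V V) (join_K1_E V E)" by (rule planar_join_K1[OF assms(1)])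
  moreover obtain \<C> where "\<C> \<subseteq> {C. is_cycle (join_K1_E V E) C}" "pairwise disjnt \<C>" "card \<C> = k"
    using glued_triangles_disjoint_cycles[OF k] by blast
  then have "phi (join_K1_V V) (join_K1_E V E) = k"
    by (rule phi_eqI) (rule glued_triangles_disjoint_cycles_card_le[OF k])
  ultimately show ?thesis using glued_triangles_num_triangles[OF k] by simp
qed

end
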